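(* Let $\gamma,\sigma:[a,b]\to V$ be continuous paths of bounded variation. Let $\phi:\mathbb{Z}\to\mathbb{C}$, $\phi_k:=\phi(k)$, be the Fourier coefficients of a bounded integrable function $f:(-\pi,\pi)\to\mathbb{C}$, i.e. $\phi_k=\frac1{2\pi}\int_{-\pi}^\pi f(x)e^{-ikx}dx$ for all $k\in\mathbb{Z}$ (so $f=\sum_{k\in\mathbb{Z}}\phi_ke_k$, $e_k(x)=e^{ikx}$). Then for all $(s,t)\in[a,b]^2$, \[ K_\phi^{\gamma,\sigma}(s,t)=\frac1{2\pi}\int_{-\pi}^{\pi}\left[K^{e^{-ix}\gamma,\sigma}(s,t)+K^{e^{ix}\gamma,\sigma}(s,t)\right]f(x)\,dx-\phi_0 . \]
   Context: $V$ is a finite-dimensional real inner product space, $\langle\cdot,\cdot\rangle_k$ the induced Hilbert–Schmidt inner product on $V^{\otimes k}$. Signature: $S(\gamma)^0=1$, $S(\gamma)^k_{s,t}=\int_{s<u_1<\dots<u_k<t}d\gamma_{u_1}\otimes\cdots\otimes d\gamma_{u_k}$. Write $c_k(s,t)=\langle S(\gamma)^k_{a,s},S(\sigma)^k_{a,t}\rangle_k$. For $\phi:\mathbb{Z}\to\mathbb{C}$ the two-sided kernel is $K_\phi^{\gamma,\sigma}(s,t)=\sum_{k=-\infty}^\infty\phi(k)c_{|k|}(s,t)$. For $w\in\mathbb{C}$, $K^{w\gamma,\sigma}(s,t):=\sum_{k\ge0}w^kc_k(s,t)$. *)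

theory Defs
  imports "HOL-Analysis.Analysis"
begin

definition is_partition :: "real \<Rightarrow> real \<Rightarrow> real list \<Rightarrow> bool" where
  "is_partition a b xs \<longleftrightarrow> xs \<noteq> [] \<and> hd xs = a \<and> last xs = b \<and> sorted_wrt (<) xs"

definition mesh_less :: "real list \<Rightarrow> real \<Rightarrow> bool" where
  "mesh_less xs d \<longleftrightarrow> (\<forall>i < length xs - 1. xs ! Suc i - xs ! i < d)"

definition bounded_variation_on :: "real \<Rightarrow> real \<Rightarrow> (real \<Rightarrow> 'a::real_normed_vector) \<Rightarrow> bool" where
  "bounded_variation_on a b g \<longleftrightarrow>
     (\<exists>M. \<forall>xs. is_partition a b xs \<longrightarrow>
        (\<Sum>i < length xs - 1. norm (g (xs ! Suc i) - g (xs ! i))) \<le> M)"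

definition tagged_partition :: "real \<Rightarrow> real \<Rightarrow> real list \<Rightarrow> real list \<Rightarrow> bool" where
  "tagged_partition a b xs ts \<longleftrightarrow> is_partition a b xs \<and> length ts = length xs - 1 \<and>
     (\<forall>i < length ts. xs ! i \<le> ts ! i \<and> ts ! i \<le> xs ! Suc i)"

definition rs_sum :: "(real \<Rightarrow> real) \<Rightarrow> (real \<Rightarrow> real) \<Rightarrow> real list \<Rightarrow> real list \<Rightarrow> real" where
  "rs_sum f g xs ts = (\<Sum>i < length xs - 1. f (ts ! i) * (g (xs ! Suc i) - g (xs ! i)))"

definition has_rs_integral :: "(real \<Rightarrow> real) \<Rightarrow> (real \<Rightarrow> real) \<Rightarrow> real \<Rightarrow> real \<Rightarrow> real \<Rightarrow> bool" where
  "has_rs_integral f g a b I \<longleftrightarrow>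
     (\<forall>e>0. \<exists>d>0. \<forall>xs ts. tagged_partition a b xs ts \<and> mesh_less xs d \<longrightarrow>
        \<bar>rs_sum f g xs ts - I\<bar> < e)"

definition rs_integral :: "(real \<Rightarrow> real) \<Rightarrow> (real \<Rightarrow> real) \<Rightarrow> real \<Rightarrow> real \<Rightarrow> real" where
  "rs_integral f g a b = (THE I. has_rs_integral f g a b I)"

text \<open>Coordinates of the signature level \<open>S(\<gamma>)^k_{a,t}\<close> with respect to the orthonormal basis
  \<open>Basis\<close> of V, tensorised. A word is stored reversed: \<open>i # w\<close> stands for the word \<open>w\<close> followed
  by the letter \<open>i\<close>, so \<open>S^{k+1}_{a,t}(w i) = \<integral>_a^t S^k_{a,u}(w) d\<gamma>^i_u\<close>.\<close>
fun sig_coord :: "(real \<Rightarrow> 'v::euclidean_space) \<Rightarrow> real \<Rightarrow> 'v list \<Rightarrow> real \<Rightarrow> real" where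
  "sig_coord \<gamma> a [] t = 1"
| "sig_coord \<gamma> a (i # w) t = rs_integral (\<lambda>u. sig_coord \<gamma> a w u) (\<lambda>u. \<gamma> u \<bullet> i) a t"

definition words :: "nat \<Rightarrow> 'v::euclidean_space list set" where
  "words k = {w. set w \<subseteq> Basis \<and> length w = k}"

text \<open>\<open>c_k(s,t) = \<langle>S(\<gamma>)^k_{a,s}, S(\<sigma>)^k_{a,t}\<rangle>\<close> (Hilbert--Schmidt inner product on \<open>V^{\<otimes>k}\<close>).\<close>
definition sig_ip :: "(real \<Rightarrow> 'v::euclidean_space) \<Rightarrow> (real \<Rightarrow> 'v) \<Rightarrow> real \<Rightarrow> nat \<Rightarrow> real \<Rightarrow> real \<Rightarrow> real" where
  "sig_ip \<gamma> \<sigma> a k s t = (\<Sum>w \<in> words k. sig_coord \<gamma> a w s * sig_coord \<sigma> a w t)"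

definition sig_kernel_w :: "complex \<Rightarrow> (real \<Rightarrow> 'v::euclidean_space) \<Rightarrow> (real \<Rightarrow> 'v) \<Rightarrow> real \<Rightarrow> real \<Rightarrow> real \<Rightarrow> complex" where
  "sig_kernel_w z \<gamma> \<sigma> a s t = (\<Sum>k. z ^ k * complex_of_real (sig_ip \<gamma> \<sigma> a k s t))"

definition sig_kernel_phi :: "(int \<Rightarrow> complex) \<Rightarrow> (real \<Rightarrow> 'v::euclidean_space) \<Rightarrow> (real \<Rightarrow> 'v) \<Rightarrow> real \<Rightarrow> real \<Rightarrow> real \<Rightarrow> complex" where
  "sig_kernel_phi \<phi> \<gamma> \<sigma> a s t = infsum (\<lambda>k. \<phi> k * complex_of_real (sig_ip \<gamma> \<sigma> a (nat \<bar>k\<bar>) s t)) UNIV"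

end

theory Submission
  imports Defs
begin

text \<open>The coordinates of the signature of \<gamma> are iterated Riemann--Stieltjes integrals against the
  coordinates of \<gamma>, whose increments are dominated by those of the continuous nondecreasing
  variation function v(t) = V(\<gamma>; a, t). Comparing Riemann--Stieltjes sums with \<integral> v^k dv bounds
  every coordinate of level k by v(t)^k / k!, hence |c_k(s,t)| \<le> (d V(\<gamma>) V(\<sigma>))^k / k! with
  d = dim V, and the c_k are absolutely summable. The one-sided kernels K^{e^{-ix}\<gamma>,\<sigma>} and
  K^{e^{ix}\<gamma>,\<sigma>} are therefore power series on the unit circle with absolutely summable coefficients;
  dominated convergence integrates them against f term by term, giving \<Sum>_k c_k \<phi>_k and
  \<Sum>_k c_k \<phi>_{-k}. Their sum counts the term c_0 \<phi>_0 = \<phi>_0 twice.\<close>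

section \<open>Partitions\<close>

lemma is_partition_Nil [simp]: "\<not> is_partition a b []"
  by (simp add: is_partition_def)

lemma is_partition_singleton [simp]: "is_partition a b [x] \<longleftrightarrow> x = a \<and> a = b"
  by (auto simp: is_partition_def)

lemma is_partition_Cons_Cons:
  "is_partition a b (x # y # r) \<longleftrightarrow> x = a \<and> a < y \<and> is_partition y b (y # r)"
proof -
  have "transp ((<) :: real \<Rightarrow> real \<Rightarrow> bool)"
    by (auto simp: transp_def)
  then show ?thesis
    by (auto simp: is_partition_def sorted_wrt2)
qed

lemma is_partition_bounds: "is_partition a b xs \<Longrightarrow> a \<le> b \<and> set xs \<subseteq> {a..b}"
proof (induction xs arbitrary: a rule: induct_list012)
  case (3 x y r)
  then show ?case
    by (fastforce simp: is_partition_Cons_Cons)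
qed auto

lemma is_partition_exists:
  assumes "a \<le> b"
  shows "\<exists>xs. is_partition a b xs"
proof (cases "a = b")
  case True
  then show ?thesis
    by (intro exI[of _ "[a]"]) simp
next
  case False
  with assms show ?thesis
    by (intro exI[of _ "[a, b]"]) (simp add: is_partition_Cons_Cons)
qed

lemma is_partition_append:
  "is_partition a b xs \<Longrightarrow> is_partition b c ys \<Longrightarrow> is_partition a c (xs @ tl ys)"
proof (induction xs arbitrary: a rule: induct_list012)
  case (2 x)
  then show ?case
    by (cases ys) (auto simp: is_partition_def)
next
  case (3 x y r)
  then show ?case
    by (simp add: is_partition_Cons_Cons)
qed simp

lemma is_partition_snoc:
  assumes "is_partition a t xs" "a < t"
  obtains ys p where "xs = ys @ [t]" "is_partition a p ys" "p < t"
proof -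
  have "\<exists>ys p. xs = ys @ [t] \<and> is_partition a p ys \<and> p < t"
    using assms
  proof (induction xs arbitrary: a rule: induct_list012)
    case (3 x y r)
    then have x: "x = a" "a < y" and yr: "is_partition y t (y # r)"
      by (auto simp: is_partition_Cons_Cons)
    show ?case
    proof (cases "y < t")
      case True
      with 3 yr obtain ys p where "y # r = ys @ [t]" "is_partition y p ys" "p < t"
        by blast
      with x show ?thesis
        by (intro exI[of _ "x # ys"] exI[of _ p]) (cases ys; auto simp: is_partition_Cons_Cons)
    next
      case False
      with yr have "r = []"
        by (cases r) (auto simp: is_partition_Cons_Cons dest: is_partition_bounds)
      with x yr show ?thesis
        by auto
    qed
  qed auto
  with that show ?thesis
    by blast
qed

definition variation_sum :: "(real \<Rightarrow> 'a::real_normed_vector) \<Rightarrow> real list \<Rightarrow> real" where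
  "variation_sum g xs = (\<Sum>i < length xs - 1. norm (g (xs ! Suc i) - g (xs ! i)))"

lemma variation_sum_Nil [simp]: "variation_sum g [] = 0"
  and variation_sum_singleton [simp]: "variation_sum g [x] = 0"
  by (simp_all add: variation_sum_def)

lemma variation_sum_Cons_Cons [simp]:
  "variation_sum g (x # y # r) = norm (g y - g x) + variation_sum g (y # r)"
  by (simp add: variation_sum_def sum.lessThan_Suc_shift del: sum.lessThan_Suc)

lemma variation_sum_nonneg: "0 \<le> variation_sum g xs"
  by (simp add: variation_sum_def sum_nonneg)

lemma variation_sum_append:
  "is_partition a b xs \<Longrightarrow> is_partition b c ys \<Longrightarrow>
    variation_sum g (xs @ tl ys) = variation_sum g xs + variation_sum g ys"
proof (induction xs arbitrary: a rule: induct_list012)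
  case (2 x)
  then show ?case
    by (cases ys) (auto simp: is_partition_def)
next
  case (3 x y r)
  then show ?case
    by (auto simp: is_partition_Cons_Cons)
qed simp

section \<open>Tagged partitions\<close>

lemma tagged_partition_Nil [simp]: "\<not> tagged_partition a b [] ts"
  and tagged_partition_singleton [simp]:
    "tagged_partition a b [x] ts \<longleftrightarrow> x = a \<and> a = b \<and> ts = []"
  and tagged_partition_Cons_Cons_Nil [simp]: "\<not> tagged_partition a b (x # y # r) []"
  by (auto simp: tagged_partition_def)

lemma tagged_partition_Cons_Cons:
  "tagged_partition a b (x # y # r) (\<tau> # ts) \<longleftrightarrow>
    x = a \<and> a < y \<and> x \<le> \<tau> \<and> \<tau> \<le> y \<and> tagged_partition y b (y # r) ts"
  by (auto simp: tagged_partition_def is_partition_Cons_Cons less_Suc_eq_0_disj)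

lemma tagged_partition_ConsE:
  assumes "tagged_partition a b (x # y # r) ts"
  obtains \<tau> ts' where "ts = \<tau> # ts'" "x = a" "a < y" "a \<le> \<tau>" "\<tau> \<le> y"
    "tagged_partition y b (y # r) ts'"
  using assms by (cases ts) (auto simp: tagged_partition_Cons_Cons)

lemma tagged_partition_hd_last: "tagged_partition a b xs ts \<Longrightarrow> hd xs = a \<and> last xs = b"
  by (simp add: tagged_partition_def is_partition_def)

lemma tagged_partition_ConsD: "tagged_partition a b (x # r) ts \<Longrightarrow> x = a"
  by (simp add: tagged_partition_def is_partition_def)

lemma tagged_partition_bounds:
  "tagged_partition a b xs ts \<Longrightarrow> a \<le> b \<and> set xs \<subseteq> {a..b} \<and> set ts \<subseteq> {a..b}"
proof (induction xs arbitrary: a ts rule: induct_list012)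
  case (3 x y r)
  then show ?case
    by (elim tagged_partition_ConsE) fastforce
qed auto

lemma rs_sum_singleton [simp]: "rs_sum F g [x] ts = 0"
  by (simp add: rs_sum_def)

lemma rs_sum_Cons_Cons [simp]:
  "rs_sum F g (x # y # r) (\<tau> # ts) = F \<tau> * (g y - g x) + rs_sum F g (y # r) ts"
  by (simp add: rs_sum_def sum.lessThan_Suc_shift del: sum.lessThan_Suc)

lemma mesh_less_singleton [simp]: "mesh_less [x] d"
  and mesh_less_Cons_Cons [simp]: "mesh_less (x # y # r) d \<longleftrightarrow> y - x < d \<and> mesh_less (y # r) d"
  by (auto simp: mesh_less_def less_Suc_eq_0_disj)

lemma mesh_less_mono: "mesh_less xs d \<Longrightarrow> d \<le> d' \<Longrightarrow> mesh_less xs d'"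
  by (fastforce simp: mesh_less_def)

lemma tagged_partition_append:
  "tagged_partition x y xs ts \<Longrightarrow> tagged_partition y z ys us \<Longrightarrow>
    tagged_partition x z (xs @ tl ys) (ts @ us)"
proof (induction xs arbitrary: x ts rule: induct_list012)
  case (2 u)
  then show ?case
    by (cases ys) (auto dest: tagged_partition_ConsD)
next
  case (3 u p r)
  then show ?case
    by (elim tagged_partition_ConsE) (simp add: tagged_partition_Cons_Cons)
qed simp

lemma rs_sum_append:
  "tagged_partition x y xs ts \<Longrightarrow> tagged_partition y z ys us \<Longrightarrow>
    rs_sum F g (xs @ tl ys) (ts @ us) = rs_sum F g xs ts + rs_sum F g ys us"
proof (induction xs arbitrary: x ts rule: induct_list012)
  case (2 u)
  then show ?case
    by (cases ys) (auto dest: tagged_partition_ConsD)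
next
  case (3 u p r)
  then show ?case
    by (elim tagged_partition_ConsE) simp
qed simp

lemma mesh_less_append:
  "tagged_partition x y xs ts \<Longrightarrow> tagged_partition y z ys us \<Longrightarrow>
    mesh_less xs d \<Longrightarrow> mesh_less ys d \<Longrightarrow> mesh_less (xs @ tl ys) d"
proof (induction xs arbitrary: x ts rule: induct_list012)
  case (2 u)
  then show ?case
    by (cases ys) (auto dest: tagged_partition_ConsD)
next
  case (3 u p r)
  then show ?case
    by (elim tagged_partition_ConsE) simp
qed simp

lemma tagged_partition_mesh_exists:
  assumes "0 < d" "x \<le> y"
  shows "\<exists>xs ts. tagged_partition x y xs ts \<and> mesh_less xs d"
proof -
  have "\<exists>xs ts. tagged_partition x y xs ts \<and> mesh_less xs d"
    if "x \<le> y" "y - x < real n * (d / 2)" for n x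
    using that
  proof (induction n arbitrary: x)
    case (Suc n)
    show ?case
    proof (cases "y - x < d")
      case True
      show ?thesis
      proof (cases "x = y")
        case True
        then show ?thesis
          by (intro exI[of _ "[x]"] exI[of _ "[]"]) simp
      next
        case False
        with \<open>y - x < d\<close> Suc.prems show ?thesis
          by (intro exI[of _ "[x, y]"] exI[of _ "[x]"]) (simp add: tagged_partition_Cons_Cons)
      qed
    next
      case False
      then have "x + d / 2 \<le> y" "y - (x + d / 2) < real n * (d / 2)"
        using Suc.prems \<open>0 < d\<close> by (auto simp: algebra_simps)
      then obtain xs ts where "tagged_partition (x + d / 2) y xs ts" "mesh_less xs d"
        using Suc.IH by blast
      moreover from this obtain r where "xs = (x + d / 2) # r"
        by (cases xs) (auto simp: tagged_partition_def is_partition_def)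
      ultimately show ?thesis
        using \<open>0 < d\<close> by (intro exI[of _ "x # xs"] exI[of _ "x # ts"]) (simp add: tagged_partition_Cons_Cons)
    qed
  qed simp
  moreover obtain n where "y - x < real n * (d / 2)"
    using reals_Archimedean3[of "d / 2"] \<open>0 < d\<close> by (meson half_gt_zero mult.commute)
  ultimately show ?thesis
    using \<open>x \<le> y\<close> by blast
qed

section \<open>Total variation\<close>

definition variation :: "(real \<Rightarrow> 'a::real_normed_vector) \<Rightarrow> real \<Rightarrow> real \<Rightarrow> real" where
  "variation g x y = Sup (variation_sum g ` {xs. is_partition x y xs})"

lemma is_partition_refl_iff: "is_partition x x xs \<longleftrightarrow> xs = [x]"
  by (cases xs rule: remdups_adj.cases) (auto simp: is_partition_Cons_Cons dest: is_partition_bounds)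

lemma variation_refl [simp]: "variation g x x = 0"
  by (simp add: variation_def is_partition_refl_iff)

lemma variation_le:
  "x \<le> y \<Longrightarrow> (\<And>xs. is_partition x y xs \<Longrightarrow> variation_sum g xs \<le> c) \<Longrightarrow> variation g x y \<le> c"
  unfolding variation_def using is_partition_exists by (intro cSup_least) auto

locale bounded_variation_path =
  fixes \<gamma> :: "real \<Rightarrow> 'a::real_normed_vector" and a b :: real
  assumes bounded_variation: "bounded_variation_on a b \<gamma>"
begin

lemma bdd_above_variation_sum:
  assumes "a \<le> x" "x \<le> y" "y \<le> b"
  shows "bdd_above (variation_sum \<gamma> ` {xs. is_partition x y xs})"
proof -
  obtain M where M: "\<And>xs. is_partition a b xs \<Longrightarrow> variation_sum \<gamma> xs \<le> M"
    using bounded_variation unfolding bounded_variation_on_def variation_sum_def by blast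
  obtain pre post where pre: "is_partition a x pre" and post: "is_partition y b post"
    using is_partition_exists assms by meson
  have "variation_sum \<gamma> xs \<le> M" if xs: "is_partition x y xs" for xs
  proof -
    have "is_partition a b ((pre @ tl xs) @ tl post)"
      using is_partition_append pre xs post by blast
    moreover have "variation_sum \<gamma> ((pre @ tl xs) @ tl post)
        = variation_sum \<gamma> pre + variation_sum \<gamma> xs + variation_sum \<gamma> post"
      using variation_sum_append is_partition_append pre xs post by metis
    ultimately show ?thesis
      using M variation_sum_nonneg[of \<gamma> pre] variation_sum_nonneg[of \<gamma> post] by fastforce
  qed
  then show ?thesis
    by (auto simp: bdd_above_def)
qed

lemma variation_sum_le_variation:
  "a \<le> x \<Longrightarrow> y \<le> b \<Longrightarrow> is_partition x y xs \<Longrightarrow> variation_sum \<gamma> xs \<le> variation \<gamma> x y"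
  unfolding variation_def by (intro cSup_upper bdd_above_variation_sum) (auto dest: is_partition_bounds)

lemma variation_nonneg: "a \<le> x \<Longrightarrow> x \<le> y \<Longrightarrow> y \<le> b \<Longrightarrow> 0 \<le> variation \<gamma> x y"
  using is_partition_exists variation_sum_le_variation variation_sum_nonneg order_trans by meson

lemma norm_le_variation:
  assumes "a \<le> x" "x \<le> y" "y \<le> b"
  shows "norm (\<gamma> y - \<gamma> x) \<le> variation \<gamma> x y"
proof (cases "x = y")
  case False
  with assms have "is_partition x y [x, y]"
    by (simp add: is_partition_Cons_Cons)
  with assms show ?thesis
    using variation_sum_le_variation by fastforce
qed simp

lemma variation_superadditive:
  assumes "a \<le> x" "x \<le> y" "y \<le> z" "z \<le> b"
  shows "variation \<gamma> x y + variation \<gamma> y z \<le> variation \<gamma> x z"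
proof -
  have "variation_sum \<gamma> ys \<le> variation \<gamma> x z - variation_sum \<gamma> xs"
    if "is_partition x y xs" "is_partition y z ys" for xs ys
    using variation_sum_le_variation[of x z "xs @ tl ys"] variation_sum_append[of x y xs z ys \<gamma>]
      is_partition_append[of x y xs z ys] that assms by simp
  then have "variation \<gamma> y z \<le> variation \<gamma> x z - variation_sum \<gamma> xs" if "is_partition x y xs" for xs
    using assms that by (intro variation_le) auto
  then have "variation \<gamma> x y \<le> variation \<gamma> x z - variation \<gamma> y z"
    using assms by (intro variation_le) (auto simp: algebra_simps)
  then show ?thesis
    by simp
qed

lemma variation_sum_le_variation_split:
  "is_partition x z xs \<Longrightarrow> a \<le> x \<Longrightarrow> x \<le> y \<Longrightarrow> y \<le> z \<Longrightarrow> z \<le> b \<Longrightarrow>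
    variation_sum \<gamma> xs \<le> variation \<gamma> x y + variation \<gamma> y z"
proof (induction xs arbitrary: x rule: induct_list012)
  case (2 u)
  then show ?case
    using variation_nonneg[of x y] variation_nonneg[of y z] by simp
next
  case (3 u p r)
  then have u: "u = x" "x < p" and pr: "is_partition p z (p # r)"
    by (auto simp: is_partition_Cons_Cons)
  show ?case
  proof (cases "p \<le> y")
    case True
    have "variation_sum \<gamma> (p # r) \<le> variation \<gamma> p y + variation \<gamma> y z"
      using "3.IH"(2)[OF pr] 3 u True by simp
    moreover have "norm (\<gamma> p - \<gamma> x) + variation \<gamma> p y \<le> variation \<gamma> x y"
      using norm_le_variation[of x p] variation_superadditive[of x p y] 3 u True by simp
    ultimately show ?thesis
      using u by simp
  next
    case False
    with u pr have "is_partition y z (y # p # r)"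
      by (simp add: is_partition_Cons_Cons)
    then have "norm (\<gamma> p - \<gamma> y) + variation_sum \<gamma> (p # r) \<le> variation \<gamma> y z"
      using variation_sum_le_variation[of y z "y # p # r"] 3 by simp
    moreover have "norm (\<gamma> p - \<gamma> x) \<le> norm (\<gamma> y - \<gamma> x) + norm (\<gamma> p - \<gamma> y)"
      using norm_triangle_ineq[of "\<gamma> y - \<gamma> x" "\<gamma> p - \<gamma> y"] by simp
    moreover have "norm (\<gamma> y - \<gamma> x) \<le> variation \<gamma> x y"
      using norm_le_variation[of x y] 3 by simp
    ultimately show ?thesis
      using u by simp
  qed
qed simp

lemma variation_add:
  assumes "a \<le> x" "x \<le> y" "y \<le> z" "z \<le> b"
  shows "variation \<gamma> x z = variation \<gamma> x y + variation \<gamma> y z"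
proof (rule antisym)
  show "variation \<gamma> x z \<le> variation \<gamma> x y + variation \<gamma> y z"
    using assms by (intro variation_le variation_sum_le_variation_split) auto
qed (rule variation_superadditive[OF assms])

lemma variation_mono:
  "a \<le> x \<Longrightarrow> x \<le> y \<Longrightarrow> y \<le> z \<Longrightarrow> z \<le> b \<Longrightarrow> variation \<gamma> x y \<le> variation \<gamma> x z"
  and variation_antimono:
  "a \<le> x \<Longrightarrow> x \<le> y \<Longrightarrow> y \<le> z \<Longrightarrow> z \<le> b \<Longrightarrow> variation \<gamma> y z \<le> variation \<gamma> x z"
  using variation_add[of x y z] variation_nonneg[of x y] variation_nonneg[of y z] by simp_all

lemma variation_sum_approx:
  assumes "a \<le> x" "x \<le> y" "y \<le> b" "0 < e"
  obtains P where "is_partition x y P" "variation \<gamma> x y - e < variation_sum \<gamma> P"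
proof -
  have "variation_sum \<gamma> ` {xs. is_partition x y xs} \<noteq> {}"
    using is_partition_exists assms by auto
  moreover have "variation \<gamma> x y - e < Sup (variation_sum \<gamma> ` {xs. is_partition x y xs})"
    using \<open>0 < e\<close> by (simp add: variation_def)
  ultimately show ?thesis
    using that less_cSup_iff[OF _ bdd_above_variation_sum[of x y]] assms by auto
qed

end

locale continuous_bv_path = bounded_variation_path +
  assumes continuous: "continuous_on {a..b} \<gamma>"
begin

lemma norm_diff_small:
  assumes "t \<in> {a..b}" "0 < e"
  obtains \<eta> where "0 < \<eta>" "\<And>y. y \<in> {a..b} \<Longrightarrow> \<bar>y - t\<bar> < \<eta> \<Longrightarrow> norm (\<gamma> y - \<gamma> t) < e"
proof -
  obtain \<eta> where "0 < \<eta>" and \<eta>: "\<forall>y\<in>{a..b}. dist y t < \<eta> \<longrightarrow> dist (\<gamma> y) (\<gamma> t) < e"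
    using continuous assms unfolding continuous_on_iff by blast
  show ?thesis
  proof (rule that)
    show "0 < \<eta>"
      by (rule \<open>0 < \<eta>\<close>)
    show "norm (\<gamma> y - \<gamma> t) < e" if "y \<in> {a..b}" "\<bar>y - t\<bar> < \<eta>" for y
      using \<eta> that by (simp add: dist_norm dist_real_def)
  qed
qed

lemma variation_right_small:
  assumes "a \<le> t" "t \<le> b" "0 < e"
  shows "\<exists>d>0. \<forall>y. t \<le> y \<longrightarrow> y \<le> b \<longrightarrow> y - t < d \<longrightarrow> variation \<gamma> t y < e"
proof (cases "t = b")
  case True
  with \<open>0 < e\<close> show ?thesis
    by (intro exI[of _ 1]) auto
next
  case False
  obtain P where P: "is_partition t b P" "variation \<gamma> t b - e / 2 < variation_sum \<gamma> P"
    using variation_sum_approx[of t b "e / 2"] assms by auto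
  with False obtain p r where P_eq: "P = t # p # r"
    by (cases P rule: remdups_adj.cases) (auto simp: is_partition_def)
  with P have "t < p" and pr: "is_partition p b (p # r)"
    by (auto simp: is_partition_Cons_Cons)
  then have "p \<le> b"
    by (auto dest: is_partition_bounds)
  obtain \<eta> where "0 < \<eta>" and \<eta>: "\<And>y. y \<in> {a..b} \<Longrightarrow> \<bar>y - t\<bar> < \<eta> \<Longrightarrow> norm (\<gamma> y - \<gamma> t) < e / 2"
    using norm_diff_small[of t "e / 2"] assms by auto
  define y where "y = min (t + \<eta> / 2) ((t + p) / 2)"
  have y: "t < y" "y < p" "y - t < \<eta>"
    using \<open>0 < \<eta>\<close> \<open>t < p\<close> by (auto simp: y_def min_less_iff_disj)
  then have "norm (\<gamma> y - \<gamma> t) < e / 2"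
    using \<eta>[of y] \<open>p \<le> b\<close> assms by simp
  moreover have "variation_sum \<gamma> P \<le> norm (\<gamma> y - \<gamma> t) + variation_sum \<gamma> (y # p # r)"
    using norm_triangle_ineq[of "\<gamma> y - \<gamma> t" "\<gamma> p - \<gamma> y"] by (simp add: P_eq)
  moreover have "variation_sum \<gamma> (y # p # r) \<le> variation \<gamma> y b"
    using variation_sum_le_variation[of y b "y # p # r"] pr y assms by (simp add: is_partition_Cons_Cons)
  ultimately have "variation \<gamma> t y < e"
    using P y variation_add[of t y b] \<open>p \<le> b\<close> assms by simp
  show ?thesis
  proof (intro exI[of _ "y - t"] conjI allI impI)
    fix y'
    assume "t \<le> y'" "y' \<le> b" "y' - t < y - t"
    then show "variation \<gamma> t y' < e"
      using variation_mono[of t y' y] \<open>variation \<gamma> t y < e\<close> y \<open>p \<le> b\<close> assms by simp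
  qed (use y in simp)
qed

lemma variation_left_small:
  assumes "a \<le> t" "t \<le> b" "0 < e"
  shows "\<exists>d>0. \<forall>x. a \<le> x \<longrightarrow> x \<le> t \<longrightarrow> t - x < d \<longrightarrow> variation \<gamma> x t < e"
proof (cases "a = t")
  case True
  with \<open>0 < e\<close> show ?thesis
    by (intro exI[of _ 1]) auto
next
  case False
  obtain P where P: "is_partition a t P" "variation \<gamma> a t - e / 2 < variation_sum \<gamma> P"
    using variation_sum_approx[of a t "e / 2"] assms by auto
  from False assms have "a < t"
    by simp
  obtain Q p where Q: "P = Q @ [t]" "is_partition a p Q" "p < t"
    by (rule is_partition_snoc[OF P(1) \<open>a < t\<close>])
  then have "a \<le> p"
    by (auto dest: is_partition_bounds)
  obtain \<eta> where "0 < \<eta>" and \<eta>: "\<And>x. x \<in> {a..b} \<Longrightarrow> \<bar>x - t\<bar> < \<eta> \<Longrightarrow> norm (\<gamma> x - \<gamma> t) < e / 2"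
    using norm_diff_small[of t "e / 2"] assms by auto
  define x where "x = max (t - \<eta> / 2) ((t + p) / 2)"
  have x: "p < x" "x < t" "t - x < \<eta>"
    using \<open>0 < \<eta>\<close> \<open>p < t\<close> by (auto simp: x_def less_max_iff_disj)
  then have "norm (\<gamma> t - \<gamma> x) < e / 2"
    using \<eta>[of x] \<open>a \<le> p\<close> assms by (simp add: norm_minus_commute)
  have snoc: "variation_sum \<gamma> (Q @ [z]) = variation_sum \<gamma> Q + norm (\<gamma> z - \<gamma> p)"
    and part: "is_partition a z (Q @ [z])" if "p < z" for z
    using variation_sum_append[OF Q(2), of z "[p, z]"] is_partition_append[OF Q(2), of z "[p, z]"] that
    by (simp_all add: is_partition_Cons_Cons)
  have "variation_sum \<gamma> P \<le> variation_sum \<gamma> (Q @ [x]) + norm (\<gamma> t - \<gamma> x)"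
    using norm_triangle_ineq[of "\<gamma> x - \<gamma> p" "\<gamma> t - \<gamma> x"] snoc[of t] snoc[of x] Q x by simp
  moreover have "variation_sum \<gamma> (Q @ [x]) \<le> variation \<gamma> a x"
    using variation_sum_le_variation part[of x] x assms by simp
  ultimately have "variation \<gamma> x t < e"
    using P x \<open>norm (\<gamma> t - \<gamma> x) < e / 2\<close> variation_add[of a x t] \<open>a \<le> p\<close> assms by simp
  show ?thesis
  proof (intro exI[of _ "t - x"] conjI allI impI)
    fix x'
    assume "a \<le> x'" "x' \<le> t" "t - x' < t - x"
    then show "variation \<gamma> x' t < e"
      using variation_antimono[of x x' t] \<open>variation \<gamma> x t < e\<close> x \<open>a \<le> p\<close> assms by simp
  qed (use x in simp)
qed

lemma continuous_on_variation: "continuous_on {a..b} (variation \<gamma> a)"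
  unfolding continuous_on_iff
proof (intro ballI allI impI)
  fix t e :: real
  assume t: "t \<in> {a..b}" and "0 < e"
  obtain d1 where "0 < d1"
    and d1: "\<And>y. t \<le> y \<Longrightarrow> y \<le> b \<Longrightarrow> y - t < d1 \<Longrightarrow> variation \<gamma> t y < e"
    using variation_right_small[of t e] t \<open>0 < e\<close> by auto
  obtain d2 where "0 < d2"
    and d2: "\<And>x. a \<le> x \<Longrightarrow> x \<le> t \<Longrightarrow> t - x < d2 \<Longrightarrow> variation \<gamma> x t < e"
    using variation_left_small[of t e] t \<open>0 < e\<close> by auto
  have "\<bar>variation \<gamma> a y - variation \<gamma> a t\<bar> < e" if y: "y \<in> {a..b}" "\<bar>y - t\<bar> < min d1 d2" for y
  proof (cases "t \<le> y")
    case True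
    then show ?thesis
      using d1[of y] variation_add[of a t y] variation_nonneg[of t y] t y by auto
  next
    case False
    then show ?thesis
      using d2[of y] variation_add[of a y t] variation_nonneg[of y t] t y by auto
  qed
  with \<open>0 < d1\<close> \<open>0 < d2\<close>
  show "\<exists>d>0. \<forall>y\<in>{a..b}. dist y t < d \<longrightarrow> dist (variation \<gamma> a y) (variation \<gamma> a t) < e"
    by (intro exI[of _ "min d1 d2"]) (auto simp: dist_real_def)
qed

end

section \<open>Riemann--Stieltjes integrals\<close>

lemma has_rs_integral_unique:
  assumes "x \<le> t" "has_rs_integral F g x t I" "has_rs_integral F g x t J"
  shows "I = J"
proof (rule ccontr)
  assume "I \<noteq> J"
  then have "0 < \<bar>I - J\<bar> / 2"
    by simp
  note pos = this
  obtain d1 where "0 < d1"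
    and d1: "\<And>xs ts. tagged_partition x t xs ts \<and> mesh_less xs d1 \<Longrightarrow> \<bar>rs_sum F g xs ts - I\<bar> < \<bar>I - J\<bar> / 2"
    using assms(2)[unfolded has_rs_integral_def, rule_format, OF pos] by blast
  obtain d2 where "0 < d2"
    and d2: "\<And>xs ts. tagged_partition x t xs ts \<and> mesh_less xs d2 \<Longrightarrow> \<bar>rs_sum F g xs ts - J\<bar> < \<bar>I - J\<bar> / 2"
    using assms(3)[unfolded has_rs_integral_def, rule_format, OF pos] by blast
  obtain xs ts where "tagged_partition x t xs ts" "mesh_less xs (min d1 d2)"
    using tagged_partition_mesh_exists[of "min d1 d2" x t] \<open>0 < d1\<close> \<open>0 < d2\<close> \<open>x \<le> t\<close> by auto
  with d1 d2 have "\<bar>rs_sum F g xs ts - I\<bar> < \<bar>I - J\<bar> / 2" "\<bar>rs_sum F g xs ts - J\<bar> < \<bar>I - J\<bar> / 2"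
    using mesh_less_mono[of xs "min d1 d2"] by simp_all
  then show False
    by (simp add: abs_if split: if_splits)
qed

lemma rs_integral_eqI: "x \<le> t \<Longrightarrow> has_rs_integral F g x t I \<Longrightarrow> rs_integral F g x t = I"
  unfolding rs_integral_def using has_rs_integral_unique by blast

lemma has_rs_integral_approx:
  assumes "has_rs_integral F g x t I" "x \<le> t" "0 < e" "0 < \<delta>"
  obtains xs ts where "tagged_partition x t xs ts" "mesh_less xs \<delta>" "\<bar>rs_sum F g xs ts - I\<bar> < e"
proof -
  obtain d where "0 < d" and d: "\<And>xs ts. tagged_partition x t xs ts \<and> mesh_less xs d \<Longrightarrow> \<bar>rs_sum F g xs ts - I\<bar> < e"
    using assms(1)[unfolded has_rs_integral_def, rule_format, OF \<open>0 < e\<close>] by blast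
  obtain xs ts where "tagged_partition x t xs ts" "mesh_less xs (min d \<delta>)"
    using tagged_partition_mesh_exists[of "min d \<delta>" x t] \<open>0 < d\<close> assms by auto
  with d that show ?thesis
    using mesh_less_mono[of xs "min d \<delta>"] by simp
qed

lemma tagged_partition_sequence_exists:
  assumes "x \<le> t"
  obtains X T where "\<And>n. tagged_partition x t (X n) (T n)"
    "\<And>n N. N \<le> n \<Longrightarrow> mesh_less (X n) (inverse (real (Suc N)))"
proof -
  have "\<forall>n. \<exists>xs ts. tagged_partition x t xs ts \<and> mesh_less xs (inverse (real (Suc n)))"
    using tagged_partition_mesh_exists \<open>x \<le> t\<close> by simp
  then obtain X T where P: "\<And>n. tagged_partition x t (X n) (T n)"
    and mesh: "\<And>n. mesh_less (X n) (inverse (real (Suc n)))"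
    by metis
  have "mesh_less (X n) (inverse (real (Suc N)))" if "N \<le> n" for n N
    by (rule mesh_less_mono[OF mesh]) (simp add: le_imp_inverse_le that)
  with P that show ?thesis
    by blast
qed

lemma has_rs_integral_CauchyI:
  assumes "x \<le> t"
    and cauchy: "\<And>e. 0 < e \<Longrightarrow> \<exists>d>0. \<forall>xs ts ys us. tagged_partition x t xs ts \<longrightarrow> mesh_less xs d \<longrightarrow>
      tagged_partition x t ys us \<longrightarrow> mesh_less ys d \<longrightarrow> \<bar>rs_sum F g xs ts - rs_sum F g ys us\<bar> \<le> e"
  shows "\<exists>I. has_rs_integral F g x t I"
proof -
  obtain X T where P: "\<And>n. tagged_partition x t (X n) (T n)"
    and P_fine: "\<And>n N. N \<le> n \<Longrightarrow> mesh_less (X n) (inverse (real (Suc N)))"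
    using tagged_partition_sequence_exists[OF \<open>x \<le> t\<close>] by blast
  define S where "S n = rs_sum F g (X n) (T n)" for n
  have close: "\<exists>N. \<forall>n\<ge>N. \<forall>xs ts. tagged_partition x t xs ts \<longrightarrow> mesh_less xs (inverse (real (Suc N))) \<longrightarrow>
      \<bar>rs_sum F g xs ts - S n\<bar> \<le> e" if e: "0 < e" for e
  proof -
    obtain d where "0 < d" and d: "\<forall>xs ts ys us. tagged_partition x t xs ts \<longrightarrow> mesh_less xs d \<longrightarrow>
      tagged_partition x t ys us \<longrightarrow> mesh_less ys d \<longrightarrow> \<bar>rs_sum F g xs ts - rs_sum F g ys us\<bar> \<le> e"
      using cauchy[OF e] by blast
    obtain N where N: "inverse (real (Suc N)) < d"
      using reals_Archimedean \<open>0 < d\<close> by blast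
    have "\<bar>rs_sum F g xs ts - S n\<bar> \<le> e"
      if "N \<le> n" "tagged_partition x t xs ts" "mesh_less xs (inverse (real (Suc N)))" for n xs ts
      using d P[of n] mesh_less_mono[OF P_fine[OF \<open>N \<le> n\<close>]] mesh_less_mono[OF that(3)] N that(2)
      unfolding S_def by (meson less_imp_le)
    then show ?thesis
      by blast
  qed
  have "Cauchy S"
  proof (rule CauchyI)
    fix e :: real
    assume "0 < e"
    then obtain N where N: "\<forall>n\<ge>N. \<forall>xs ts. tagged_partition x t xs ts \<longrightarrow>
        mesh_less xs (inverse (real (Suc N))) \<longrightarrow> \<bar>rs_sum F g xs ts - S n\<bar> \<le> e / 2"
      using close[of "e / 2"] by auto
    have "\<bar>S m - S n\<bar> \<le> e / 2" if "N \<le> m" "N \<le> n" for m n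
      using N P[of m] P_fine[of N m] that unfolding S_def by blast
    with \<open>0 < e\<close> show "\<exists>M. \<forall>m\<ge>M. \<forall>n\<ge>M. norm (S m - S n) < e"
      by (intro exI[of _ N]) force
  qed
  then obtain I where I: "S \<longlonglongrightarrow> I"
    using Cauchy_convergent_iff convergent_def by blast
  have "has_rs_integral F g x t I"
    unfolding has_rs_integral_def
  proof (intro allI impI)
    fix e :: real
    assume "0 < e"
    then obtain N1 where N1: "\<forall>n\<ge>N1. \<forall>xs ts. tagged_partition x t xs ts \<longrightarrow>
        mesh_less xs (inverse (real (Suc N1))) \<longrightarrow> \<bar>rs_sum F g xs ts - S n\<bar> \<le> e / 2"
      using close[of "e / 2"] by auto
    obtain N2 where N2: "\<And>n. N2 \<le> n \<Longrightarrow> \<bar>S n - I\<bar> < e / 2"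
      using LIMSEQ_D[OF I, of "e / 2"] \<open>0 < e\<close> by auto
    have "\<bar>rs_sum F g xs ts - I\<bar> < e"
      if "tagged_partition x t xs ts \<and> mesh_less xs (inverse (real (Suc N1)))" for xs ts
    proof -
      have "\<bar>rs_sum F g xs ts - S (max N1 N2)\<bar> \<le> e / 2"
        using N1 that by simp
      with N2[of "max N1 N2"] show ?thesis
        by linarith
    qed
    then show "\<exists>d>0. \<forall>xs ts. tagged_partition x t xs ts \<and> mesh_less xs d \<longrightarrow> \<bar>rs_sum F g xs ts - I\<bar> < e"
      by (intro exI[of _ "inverse (real (Suc N1))"]) auto
  qed
  then show ?thesis
    by blast
qed

lemma power_mult_diff_le:
  fixes z z' :: real
  assumes "0 \<le> z" "z \<le> z'"
  shows "real (Suc k) * z ^ k * (z' - z) \<le> z' ^ Suc k - z ^ Suc k"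
proof -
  have "real (card {..<Suc k}) * z ^ k \<le> (\<Sum>i<Suc k. z ^ (k - i) * z' ^ i)"
  proof (rule sum_bounded_below)
    fix i
    assume "i \<in> {..<Suc k}"
    then have "z ^ k = z ^ (k - i) * z ^ i"
      by (simp flip: power_add)
    also have "\<dots> \<le> z ^ (k - i) * z' ^ i"
      using assms by (intro mult_left_mono power_mono) auto
    finally show "z ^ k \<le> z ^ (k - i) * z' ^ i" .
  qed
  moreover have "z' ^ Suc k - z ^ Suc k = (z' - z) * (\<Sum>i<Suc k. z ^ (k - i) * z' ^ i)"
    using power_diff_sumr2[of z' "Suc k" z] by simp
  ultimately show ?thesis
    using assms by (simp add: mult.commute mult.left_commute mult_left_mono)
qed

lemma power_increment_le:
  fixes z z' \<epsilon> :: real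
  assumes "0 \<le> z" "z \<le> z'" "z' - z \<le> \<epsilon>"
  shows "z' ^ k * (z' - z) \<le> (z' ^ Suc k - z ^ Suc k) / real (Suc k) + \<epsilon> * (z' ^ k - z ^ k)"
proof -
  have "z ^ k * (z' - z) \<le> (z' ^ Suc k - z ^ Suc k) / real (Suc k)"
    using power_mult_diff_le[OF assms(1,2), of k] by (simp add: field_simps)
  moreover have "(z' ^ k - z ^ k) * (z' - z) \<le> (z' ^ k - z ^ k) * \<epsilon>"
    using assms power_mono[of z z' k] by (intro mult_left_mono) auto
  ultimately show ?thesis
    by (simp add: algebra_simps)
qed

text \<open>Unlike a tagged partition of small mesh, a loosely tagged list stays loosely tagged when its
  first cell is cut short; this is what lets the comparison of two Riemann--Stieltjes sums below
  proceed by induction.\<close>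

fun loosely_tagged :: "real \<Rightarrow> real list \<Rightarrow> real list \<Rightarrow> bool" where
  "loosely_tagged d [x] [] \<longleftrightarrow> True"
| "loosely_tagged d (x # y # r) (\<tau> # ts) \<longleftrightarrow>
    x < y \<and> y - x < d \<and> y - d < \<tau> \<and> \<tau> \<le> y \<and> loosely_tagged d (y # r) ts"
| "loosely_tagged d _ _ \<longleftrightarrow> False"

lemma loosely_tagged_if_mesh_less:
  "tagged_partition x t xs ts \<Longrightarrow> mesh_less xs d \<Longrightarrow> loosely_tagged d xs ts"
proof (induction xs arbitrary: x ts rule: induct_list012)
  case (3 u y r)
  then show ?case
    by (elim tagged_partition_ConsE) auto
qed auto

lemma loosely_tagged_cases:
  assumes "loosely_tagged d xs ts"
  obtains x where "xs = [x]" "ts = []"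
  | x p r \<tau> ts' where "xs = x # p # r" "ts = \<tau> # ts'" "x < p" "p - x < d" "p - d < \<tau>" "\<tau> \<le> p"
      "loosely_tagged d (p # r) ts'"
  using assms by (cases "(d, xs, ts)" rule: loosely_tagged.cases) auto

lemma loosely_tagged_hd_le_last: "loosely_tagged d xs ts \<Longrightarrow> hd xs \<le> last xs"
  by (induction d xs ts rule: loosely_tagged.induct) auto

lemma loosely_tagged_shrink_first_cell:
  assumes "loosely_tagged d (x # q # r) (\<sigma> # us)" "x < p" "p \<le> q"
  obtains ys us' where "loosely_tagged d (p # ys) us'" "last (p # ys) = last (q # r)"
    "length ys \<le> length (q # r)" "set ys \<subseteq> set (q # r)" "set us' \<subseteq> set (\<sigma> # us)"
    "rs_sum F g (x # q # r) (\<sigma> # us) = F \<sigma> * (g p - g x) + rs_sum F g (p # ys) us'"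
proof (cases "p = q")
  case True
  with assms that[of r us] show ?thesis
    by auto
next
  case False
  with assms that[of "q # r" "\<sigma> # us"] show ?thesis
    by (auto simp: algebra_simps)
qed

lemma loosely_tagged_pair_cases:
  assumes xs: "loosely_tagged d xs ts" and ys: "loosely_tagged d ys us"
    and hd: "hd xs = hd ys" and last: "last xs = last ys"
  obtains x where "xs = [x]" "ts = []" "ys = [x]" "us = []"
  | x p r \<tau> ts' q r' \<sigma> us' where "xs = x # p # r" "ts = \<tau> # ts'" "ys = x # q # r'" "us = \<sigma> # us'"
proof -
  have hd_less_last: "x < last (p # r)" if "x < p" "loosely_tagged d (p # r) ts'" for x p r ts'
    using that loosely_tagged_hd_le_last[of d "p # r" ts'] by simp
  from xs show ?thesis
  proof (cases rule: loosely_tagged_cases)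
    case xs': (1 x)
    from ys show ?thesis
    proof (cases rule: loosely_tagged_cases)
      case (1 y)
      with xs' hd that(1) show ?thesis
        by simp
    next
      case (2 y q r' \<sigma> us')
      with xs' hd last hd_less_last[of y q r' us'] show ?thesis
        by simp
    qed
  next
    case xs': (2 x p r \<tau> ts')
    from ys show ?thesis
    proof (cases rule: loosely_tagged_cases)
      case (1 y)
      with xs' hd last hd_less_last[of x p r ts'] show ?thesis
        by simp
    next
      case (2 y q r' \<sigma> us')
      with xs' hd that(2) show ?thesis
        by simp
    qed
  qed
qed

locale rs_controlled =
  fixes g v :: "real \<Rightarrow> real" and a b :: real
  assumes continuous_control: "continuous_on {a..b} v"
    and increment_le_control: "\<And>x y. a \<le> x \<Longrightarrow> x \<le> y \<Longrightarrow> y \<le> b \<Longrightarrow> \<bar>g y - g x\<bar> \<le> v y - v x"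
begin

lemma control_mono: "a \<le> x \<Longrightarrow> x \<le> y \<Longrightarrow> y \<le> b \<Longrightarrow> v x \<le> v y"
  using increment_le_control[of x y] by linarith

lemma control_uniformly_small:
  assumes "0 < e"
  shows "\<exists>d>0. \<forall>x y. a \<le> x \<longrightarrow> x \<le> y \<longrightarrow> y \<le> b \<longrightarrow> y - x < d \<longrightarrow> v y - v x < e"
proof -
  have "uniformly_continuous_on {a..b} v"
    by (rule compact_uniformly_continuous[OF continuous_control]) simp
  then obtain d where "0 < d"
    and d: "\<And>x y. x \<in> {a..b} \<Longrightarrow> y \<in> {a..b} \<Longrightarrow> dist y x < d \<Longrightarrow> dist (v y) (v x) < e"
    using \<open>0 < e\<close> unfolding uniformly_continuous_on_def by metis
  show ?thesis
  proof (intro exI[of _ d] conjI allI impI)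
    fix x y
    assume "a \<le> x" "x \<le> y" "y \<le> b" "y - x < d"
    then show "v y - v x < e"
      using d[of x y] by (simp add: dist_real_def abs_less_iff)
  qed (rule \<open>0 < d\<close>)
qed

lemma continuous_on_integrator: "continuous_on {a..b} g"
  unfolding continuous_on_iff
proof (intro ballI allI impI)
  fix t e :: real
  assume t: "t \<in> {a..b}" and "0 < e"
  then obtain d where "0 < d"
    and d: "\<And>x y. a \<le> x \<Longrightarrow> x \<le> y \<Longrightarrow> y \<le> b \<Longrightarrow> y - x < d \<Longrightarrow> v y - v x < e"
    using control_uniformly_small by blast
  have "\<bar>g y - g t\<bar> < e" if "y \<in> {a..b}" "\<bar>y - t\<bar> < d" for y
  proof (cases "t \<le> y")
    case True
    with that t show ?thesis
      using increment_le_control[of t y] d[of t y] by auto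
  next
    case False
    with that t show ?thesis
      using increment_le_control[of y t] d[of y t] by auto
  qed
  with \<open>0 < d\<close> show "\<exists>d>0. \<forall>y\<in>{a..b}. dist y t < d \<longrightarrow> dist (g y) (g t) < e"
    by (auto simp: dist_real_def)
qed

lemma rs_sum_first_cell_diff:
  assumes F: "\<And>u u'. u \<in> {a..b} \<Longrightarrow> u' \<in> {a..b} \<Longrightarrow> \<bar>u - u'\<bar> < 2 * d \<Longrightarrow> \<bar>F u - F u'\<bar> \<le> \<omega>"
    and "p \<le> q" and xs: "loosely_tagged d (x # p # r) (\<tau> # ts)"
    and ys: "loosely_tagged d (x # q # r') (\<sigma> # us)"
    and sets: "set (x # p # r) \<union> set (\<tau> # ts) \<union> set (x # q # r') \<union> set (\<sigma> # us) \<subseteq> {a..b}"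
  obtains ys' us' where "loosely_tagged d (p # ys') us'" "last (p # ys') = last (q # r')"
    "length ys' \<le> length (q # r')" "set (p # r) \<union> set ts \<union> set (p # ys') \<union> set us' \<subseteq> {a..b}"
    "\<bar>rs_sum F g (x # p # r) (\<tau> # ts) - rs_sum F g (x # q # r') (\<sigma> # us)\<bar>
      \<le> \<omega> * (v p - v x) + \<bar>rs_sum F g (p # r) ts - rs_sum F g (p # ys') us'\<bar>"
proof -
  from xs have "x < p" "p - d < \<tau>" "\<tau> \<le> p"
    by auto
  from ys have "q - x < d" "q - d < \<sigma>" "\<sigma> \<le> q"
    by auto
  obtain ys' us' where ys': "loosely_tagged d (p # ys') us'" "last (p # ys') = last (q # r')"
    "length ys' \<le> length (q # r')" "set ys' \<subseteq> set (q # r')" "set us' \<subseteq> set (\<sigma> # us)"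
    and split: "rs_sum F g (x # q # r') (\<sigma> # us) = F \<sigma> * (g p - g x) + rs_sum F g (p # ys') us'"
    using loosely_tagged_shrink_first_cell[OF ys \<open>x < p\<close> \<open>p \<le> q\<close>] by blast
  have "\<bar>F \<tau> - F \<sigma>\<bar> \<le> \<omega>"
    using F[of \<tau> \<sigma>] sets \<open>x < p\<close> \<open>p - d < \<tau>\<close> \<open>\<tau> \<le> p\<close> \<open>p \<le> q\<close> \<open>q - x < d\<close> \<open>q - d < \<sigma>\<close> \<open>\<sigma> \<le> q\<close>
    by auto
  moreover have "\<bar>g p - g x\<bar> \<le> v p - v x"
    using increment_le_control[of x p] sets \<open>x < p\<close> by auto
  ultimately have first: "\<bar>(F \<tau> - F \<sigma>) * (g p - g x)\<bar> \<le> \<omega> * (v p - v x)"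
    unfolding abs_mult by (intro mult_mono) auto
  have "rs_sum F g (x # p # r) (\<tau> # ts) - rs_sum F g (x # q # r') (\<sigma> # us)
      = (F \<tau> - F \<sigma>) * (g p - g x) + (rs_sum F g (p # r) ts - rs_sum F g (p # ys') us')"
    unfolding split rs_sum_Cons_Cons[of F g x p r \<tau> ts] by (simp add: algebra_simps)
  then have "\<bar>rs_sum F g (x # p # r) (\<tau> # ts) - rs_sum F g (x # q # r') (\<sigma> # us)\<bar>
      \<le> \<bar>(F \<tau> - F \<sigma>) * (g p - g x)\<bar> + \<bar>rs_sum F g (p # r) ts - rs_sum F g (p # ys') us'\<bar>"
    by (simp only: abs_triangle_ineq)
  with first have bound: "\<bar>rs_sum F g (x # p # r) (\<tau> # ts) - rs_sum F g (x # q # r') (\<sigma> # us)\<bar>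
      \<le> \<omega> * (v p - v x) + \<bar>rs_sum F g (p # r) ts - rs_sum F g (p # ys') us'\<bar>"
    by linarith
  have "set (p # r) \<union> set ts \<union> set (p # ys') \<union> set us' \<subseteq> {a..b}"
    using sets ys'(4,5) by auto
  from that[OF ys'(1-3) this bound] show ?thesis .
qed

text \<open>The two sums are peeled off from the left, always along the shorter of the two first cells.\<close>

lemma rs_sum_loosely_tagged_diff:
  assumes F: "\<And>u u'. u \<in> {a..b} \<Longrightarrow> u' \<in> {a..b} \<Longrightarrow> \<bar>u - u'\<bar> < 2 * d \<Longrightarrow> \<bar>F u - F u'\<bar> \<le> \<omega>"
  shows "loosely_tagged d xs ts \<Longrightarrow> loosely_tagged d ys us \<Longrightarrow> hd xs = hd ys \<Longrightarrow> last xs = last ys \<Longrightarrow>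
    set xs \<union> set ts \<union> set ys \<union> set us \<subseteq> {a..b} \<Longrightarrow>
    \<bar>rs_sum F g xs ts - rs_sum F g ys us\<bar> \<le> \<omega> * (v (last xs) - v (hd xs))"
proof (induction "length xs + length ys" arbitrary: xs ys ts us rule: less_induct)
  case less
  have first_cell: "\<bar>rs_sum F g (x # p # r) (\<tau> # ts') - rs_sum F g (x # q # r') (\<sigma> # us')\<bar>
      \<le> \<omega> * (v (last (p # r)) - v x)"
    if "p \<le> q" and xs: "loosely_tagged d (x # p # r) (\<tau> # ts')"
      and ys: "loosely_tagged d (x # q # r') (\<sigma> # us')" and last: "last (p # r) = last (q # r')"
      and sets: "set (x # p # r) \<union> set (\<tau> # ts') \<union> set (x # q # r') \<union> set (\<sigma> # us') \<subseteq> {a..b}"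
      and len: "length (x # p # r) + length (x # q # r') = length xs + length ys"
    for x p q r r' \<tau> \<sigma> ts' us'
  proof -
    obtain ys' us'' where ys': "loosely_tagged d (p # ys') us''" "last (p # ys') = last (q # r')"
      "length ys' \<le> length (q # r')" "set (p # r) \<union> set ts' \<union> set (p # ys') \<union> set us'' \<subseteq> {a..b}"
      and diff: "\<bar>rs_sum F g (x # p # r) (\<tau> # ts') - rs_sum F g (x # q # r') (\<sigma> # us')\<bar>
        \<le> \<omega> * (v p - v x) + \<bar>rs_sum F g (p # r) ts' - rs_sum F g (p # ys') us''\<bar>"
      using rs_sum_first_cell_diff[where F = F and \<omega> = \<omega>, OF F \<open>p \<le> q\<close> xs ys sets] by blast
    have shorter: "length (p # r) + length (p # ys') < length xs + length ys"
      using len ys'(3) by simp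
    have xs': "loosely_tagged d (p # r) ts'"
      using xs by simp
    have same_last: "last (p # r) = last (p # ys')"
      using last ys'(2) by simp
    have "\<bar>rs_sum F g (p # r) ts' - rs_sum F g (p # ys') us''\<bar> \<le> \<omega> * (v (last (p # r)) - v (hd (p # r)))"
      by (rule less.hyps[OF shorter xs' ys'(1) _ same_last ys'(4)]) simp
    then have "\<bar>rs_sum F g (p # r) ts' - rs_sum F g (p # ys') us''\<bar> \<le> \<omega> * (v (last (p # r)) - v p)"
      by simp
    with diff show ?thesis
      by (simp add: algebra_simps)
  qed
  from less.prems(1-4) show ?case
  proof (cases rule: loosely_tagged_pair_cases)
    case (2 x p r \<tau> ts' q r' \<sigma> us')
    consider "p \<le> q" | "q \<le> p"
      by linarith
    then show ?thesis
    proof cases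
      case 1
      then show ?thesis
        using first_cell[of p q x r \<tau> ts' r' \<sigma> us'] 2 less.prems by simp
    next
      case 2
      then show ?thesis
        using first_cell[of q p x r' \<sigma> us' r \<tau> ts'] \<open>xs = x # p # r\<close> \<open>ys = x # q # r'\<close> less.prems
          \<open>ts = \<tau> # ts'\<close> \<open>us = \<sigma> # us'\<close>
        by (simp add: abs_minus_commute ac_simps)
    qed
  qed simp
qed

lemma has_rs_integral_exists:
  assumes "continuous_on {a..b} F" "a \<le> x" "x \<le> t" "t \<le> b"
  shows "\<exists>I. has_rs_integral F g x t I"
proof (rule has_rs_integral_CauchyI[OF \<open>x \<le> t\<close>])
  fix e :: real
  assume "0 < e"
  have "0 \<le> v t - v x"
    using control_mono assms by simp
  define \<omega> where "\<omega> = e / (v t - v x + 1)"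
  have "0 < \<omega>" "\<omega> * (v t - v x) \<le> e"
    using \<open>0 < e\<close> \<open>0 \<le> v t - v x\<close> by (simp_all add: \<omega>_def field_simps)
  have "uniformly_continuous_on {a..b} F"
    by (rule compact_uniformly_continuous[OF assms(1)]) simp
  then obtain d where "0 < d"
    and d: "\<And>u u'. u \<in> {a..b} \<Longrightarrow> u' \<in> {a..b} \<Longrightarrow> dist u' u < d \<Longrightarrow> dist (F u') (F u) < \<omega>"
    using \<open>0 < \<omega>\<close> unfolding uniformly_continuous_on_def by metis
  have F: "\<bar>F u - F u'\<bar> \<le> \<omega>" if "u \<in> {a..b}" "u' \<in> {a..b}" "\<bar>u - u'\<bar> < 2 * (d / 2)" for u u'
    using d[of u' u] that by (simp add: dist_real_def)
  show "\<exists>d>0. \<forall>xs ts ys us. tagged_partition x t xs ts \<longrightarrow> mesh_less xs d \<longrightarrow>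
      tagged_partition x t ys us \<longrightarrow> mesh_less ys d \<longrightarrow> \<bar>rs_sum F g xs ts - rs_sum F g ys us\<bar> \<le> e"
  proof (intro exI[of _ "d / 2"] conjI allI impI)
    fix xs ts ys us
    assume P: "tagged_partition x t xs ts" "mesh_less xs (d / 2)"
      and Q: "tagged_partition x t ys us" "mesh_less ys (d / 2)"
    have "\<bar>rs_sum F g xs ts - rs_sum F g ys us\<bar> \<le> \<omega> * (v (last xs) - v (hd xs))"
    proof (rule rs_sum_loosely_tagged_diff[OF F])
      show "loosely_tagged (d / 2) xs ts" "loosely_tagged (d / 2) ys us"
        using P Q by (simp_all add: loosely_tagged_if_mesh_less)
      show "hd xs = hd ys" "last xs = last ys"
        using P(1) Q(1) by (simp_all add: tagged_partition_hd_last)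
      show "set xs \<union> set ts \<union> set ys \<union> set us \<subseteq> {a..b}"
        using tagged_partition_bounds[OF P(1)] tagged_partition_bounds[OF Q(1)] assms by auto
    qed
    with \<open>\<omega> * (v t - v x) \<le> e\<close> show "\<bar>rs_sum F g xs ts - rs_sum F g ys us\<bar> \<le> e"
      using tagged_partition_hd_last[OF P(1)] by simp
  qed (use \<open>0 < d\<close> in simp)
qed

lemma abs_rs_sum_le_const:
  assumes F: "\<And>u. u \<in> {a..b} \<Longrightarrow> \<bar>F u\<bar> \<le> M"
  shows "tagged_partition x t xs ts \<Longrightarrow> a \<le> x \<Longrightarrow> t \<le> b \<Longrightarrow> \<bar>rs_sum F g xs ts\<bar> \<le> M * (v t - v x)"
proof (induction xs arbitrary: x ts rule: induct_list012)
  case (3 u y r)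
  obtain \<tau> ts' where "ts = \<tau> # ts'" "u = x" "x < y" "x \<le> \<tau>" "\<tau> \<le> y" and yr: "tagged_partition y t (y # r) ts'"
    by (rule tagged_partition_ConsE[OF "3.prems"(1)])
  moreover have "y \<le> t"
    using tagged_partition_bounds[OF yr] by simp
  ultimately have "\<bar>F \<tau> * (g y - g x)\<bar> \<le> M * (v y - v x)"
    using F[of \<tau>] increment_le_control[of x y] "3.prems" unfolding abs_mult by (intro mult_mono) auto
  moreover have "\<bar>rs_sum F g (y # r) ts'\<bar> \<le> M * (v t - v y)"
    using "3.IH"(2)[OF yr] \<open>x < y\<close> "3.prems" by simp
  ultimately show ?case
    using \<open>ts = \<tau> # ts'\<close> \<open>u = x\<close> by (simp add: abs_triangle_ineq order_trans[OF abs_triangle_ineq] algebra_simps)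
qed auto

text \<open>The bound is \<open>c \<integral> w\<^sup>k dw\<close> for \<open>w = v - v a\<close> over the partitioned interval, plus the error of
  evaluating \<open>w\<^sup>k\<close> at right end points when \<open>w\<close> grows by at most \<open>\<epsilon>\<close> on each cell.\<close>

lemma abs_rs_sum_le_power:
  assumes F: "\<And>u. u \<in> {a..b} \<Longrightarrow> \<bar>F u\<bar> \<le> c * (v u - v a) ^ k" and "0 \<le> c"
    and small: "\<And>p q. a \<le> p \<Longrightarrow> p \<le> q \<Longrightarrow> q \<le> b \<Longrightarrow> q - p < \<delta> \<Longrightarrow> v q - v p \<le> \<epsilon>"
  shows "tagged_partition x t xs ts \<Longrightarrow> mesh_less xs \<delta> \<Longrightarrow> a \<le> x \<Longrightarrow> t \<le> b \<Longrightarrow>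
    \<bar>rs_sum F g xs ts\<bar> \<le> c * (((v t - v a) ^ Suc k - (v x - v a) ^ Suc k) / real (Suc k)
      + \<epsilon> * ((v t - v a) ^ k - (v x - v a) ^ k))"
proof (induction xs arbitrary: x ts rule: induct_list012)
  case (3 u y r)
  define w where "w z = v z - v a" for z
  obtain \<tau> ts' where "ts = \<tau> # ts'" "u = x" "x < y" "x \<le> \<tau>" "\<tau> \<le> y" and yr: "tagged_partition y t (y # r) ts'"
    by (rule tagged_partition_ConsE[OF "3.prems"(1)])
  moreover have "y \<le> t"
    using tagged_partition_bounds[OF yr] by simp
  ultimately have w: "0 \<le> w x" "w x \<le> w y" "w y - w x \<le> \<epsilon>" "0 \<le> w \<tau>" "w \<tau> \<le> w y"
    using control_mono small[of x y] "3.prems" by (auto simp: w_def)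
  have "\<bar>F \<tau> * (g y - g x)\<bar> \<le> c * w \<tau> ^ k * (w y - w x)"
    using F[of \<tau>] increment_le_control[of x y] \<open>x \<le> \<tau>\<close> \<open>\<tau> \<le> y\<close> \<open>y \<le> t\<close> "3.prems"
    unfolding abs_mult w_def by (intro mult_mono) auto
  also have "\<dots> \<le> c * (w y ^ k * (w y - w x))"
    using w \<open>0 \<le> c\<close> by (simp add: mult.assoc mult_left_mono mult_right_mono power_mono)
  also have "\<dots> \<le> c * ((w y ^ Suc k - w x ^ Suc k) / real (Suc k) + \<epsilon> * (w y ^ k - w x ^ k))"
    using power_increment_le[OF w(1-3)] \<open>0 \<le> c\<close> by (rule mult_left_mono)
  finally have "\<bar>F \<tau> * (g y - g x)\<bar> \<le> c * ((w y ^ Suc k - w x ^ Suc k) / real (Suc k) + \<epsilon> * (w y ^ k - w x ^ k))" .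
  moreover have "\<bar>rs_sum F g (y # r) ts'\<bar>
      \<le> c * ((w t ^ Suc k - w y ^ Suc k) / real (Suc k) + \<epsilon> * (w t ^ k - w y ^ k))"
    using "3.IH"(2)[OF yr] \<open>x < y\<close> "3.prems" by (simp add: w_def)
  ultimately have "\<bar>F \<tau> * (g y - g x)\<bar> + \<bar>rs_sum F g (y # r) ts'\<bar>
      \<le> c * ((w y ^ Suc k - w x ^ Suc k) / real (Suc k) + \<epsilon> * (w y ^ k - w x ^ k))
        + c * ((w t ^ Suc k - w y ^ Suc k) / real (Suc k) + \<epsilon> * (w t ^ k - w y ^ k))"
    by (rule add_mono)
  also have "\<dots> = c * ((w t ^ Suc k - w x ^ Suc k) / real (Suc k) + \<epsilon> * (w t ^ k - w x ^ k))"
    unfolding diff_divide_distrib ring_distribs by linarith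
  finally have "\<bar>rs_sum F g (x # y # r) (\<tau> # ts')\<bar>
      \<le> c * ((w t ^ Suc k - w x ^ Suc k) / real (Suc k) + \<epsilon> * (w t ^ k - w x ^ k))"
    using abs_triangle_ineq[of "F \<tau> * (g y - g x)" "rs_sum F g (y # r) ts'"] by simp
  then show ?case
    using \<open>ts = \<tau> # ts'\<close> \<open>u = x\<close> by (simp add: w_def)
qed auto

lemma has_rs_integral_power_bound:
  assumes I: "has_rs_integral F g a t I" and "a \<le> t" "t \<le> b"
    and F: "\<And>u. u \<in> {a..b} \<Longrightarrow> \<bar>F u\<bar> \<le> c * (v u - v a) ^ k" and "0 \<le> c"
  shows "\<bar>I\<bar> \<le> c * (v t - v a) ^ Suc k / real (Suc k)"
proof (rule field_le_epsilon)
  fix e :: real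
  assume "0 < e"
  define W where "W = v t - v a"
  have "0 \<le> W"
    using control_mono assms by (simp add: W_def)
  then have "0 \<le> c * W ^ k"
    using \<open>0 \<le> c\<close> by simp
  define \<epsilon> where "\<epsilon> = e / (2 * (c * W ^ k + 1))"
  have "0 < \<epsilon>" "c * (\<epsilon> * W ^ k) \<le> e / 2"
    using \<open>0 < e\<close> \<open>0 \<le> c * W ^ k\<close> by (simp_all add: \<epsilon>_def field_simps)
  then obtain \<delta> where "0 < \<delta>"
    and \<delta>: "\<And>p q. a \<le> p \<Longrightarrow> p \<le> q \<Longrightarrow> q \<le> b \<Longrightarrow> q - p < \<delta> \<Longrightarrow> v q - v p < \<epsilon>"
    using control_uniformly_small by blast
  obtain xs ts where P: "tagged_partition a t xs ts" "mesh_less xs \<delta>" "\<bar>rs_sum F g xs ts - I\<bar> < e / 2"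
    using has_rs_integral_approx[OF I \<open>a \<le> t\<close> _ \<open>0 < \<delta>\<close>] \<open>0 < e\<close> by (metis half_gt_zero)
  have small: "v q - v p \<le> \<epsilon>" if "a \<le> p" "p \<le> q" "q \<le> b" "q - p < \<delta>" for p q
    using \<delta>[OF that] by simp
  have "\<bar>rs_sum F g xs ts\<bar> \<le> c * ((W ^ Suc k - 0 ^ Suc k) / real (Suc k) + \<epsilon> * (W ^ k - 0 ^ k))"
    using abs_rs_sum_le_power[OF F \<open>0 \<le> c\<close> small P(1,2) order.refl \<open>t \<le> b\<close>] by (simp add: W_def)
  also have "\<dots> \<le> c * W ^ Suc k / real (Suc k) + c * (\<epsilon> * W ^ k)"
    using \<open>0 \<le> c\<close> \<open>0 < \<epsilon>\<close> by (cases k) (simp_all add: field_simps)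
  moreover have "\<bar>I\<bar> \<le> \<bar>rs_sum F g xs ts\<bar> + \<bar>rs_sum F g xs ts - I\<bar>"
    using abs_triangle_ineq[of "rs_sum F g xs ts" "I - rs_sum F g xs ts"] by (simp add: abs_minus_commute)
  ultimately show "\<bar>I\<bar> \<le> c * (v t - v a) ^ Suc k / real (Suc k) + e"
    using P(3) \<open>c * (\<epsilon> * W ^ k) \<le> e / 2\<close> by (simp add: W_def)
qed

lemma has_rs_integral_increment_le:
  assumes I: "has_rs_integral F g a t I" and J: "has_rs_integral F g a t' J"
    and "a \<le> t" "t \<le> t'" "t' \<le> b" and F: "\<And>u. u \<in> {a..b} \<Longrightarrow> \<bar>F u\<bar> \<le> M"
  shows "\<bar>J - I\<bar> \<le> M * (v t' - v t)"
proof (rule field_le_epsilon)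
  fix e :: real
  assume "0 < e"
  then have "0 < e / 2"
    by simp
  then obtain d where "0 < d"
    and d: "\<And>xs ts. tagged_partition a t' xs ts \<and> mesh_less xs d \<Longrightarrow> \<bar>rs_sum F g xs ts - J\<bar> < e / 2"
    using J[unfolded has_rs_integral_def, rule_format, of "e / 2"] by blast
  obtain xs ts where P: "tagged_partition a t xs ts" "mesh_less xs d" "\<bar>rs_sum F g xs ts - I\<bar> < e / 2"
    using has_rs_integral_approx[OF I \<open>a \<le> t\<close> \<open>0 < e / 2\<close> \<open>0 < d\<close>] by blast
  obtain ys us where Q: "tagged_partition t t' ys us" "mesh_less ys d"
    using tagged_partition_mesh_exists[of d t t'] \<open>0 < d\<close> \<open>t \<le> t'\<close> by auto
  have "\<bar>rs_sum F g xs ts + rs_sum F g ys us - J\<bar> < e / 2"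
    using d[of "xs @ tl ys" "ts @ us"] tagged_partition_append[OF P(1) Q(1)]
      mesh_less_append[OF P(1) Q(1) P(2) Q(2)] rs_sum_append[OF P(1) Q(1)] by simp
  moreover have "\<bar>rs_sum F g ys us\<bar> \<le> M * (v t' - v t)"
    using abs_rs_sum_le_const[OF F Q(1)] assms by simp
  ultimately show "\<bar>J - I\<bar> \<le> M * (v t' - v t) + e"
    using P(3) by linarith
qed

lemma rs_controlled_indefinite_integral:
  assumes G: "\<And>t. t \<in> {a..b} \<Longrightarrow> has_rs_integral F g a t (G t)"
    and F: "\<And>u. u \<in> {a..b} \<Longrightarrow> \<bar>F u\<bar> \<le> M"
  shows "rs_controlled G (\<lambda>u. M * v u) a b"
proof
  show "continuous_on {a..b} (\<lambda>u. M * v u)"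
    using continuous_control by (intro continuous_intros)
  fix x y
  assume "a \<le> x" "x \<le> y" "y \<le> b"
  then show "\<bar>G y - G x\<bar> \<le> M * v y - M * v x"
    using has_rs_integral_increment_le[OF G[of x] G[of y] _ _ _ F] by (simp add: right_diff_distrib)
qed

end

section \<open>Signature bounds\<close>

lemma rs_controlled_coordinate:
  fixes \<gamma> :: "real \<Rightarrow> 'v::real_inner"
  assumes "continuous_bv_path \<gamma> a b" "norm i \<le> 1"
  shows "rs_controlled (\<lambda>u. \<gamma> u \<bullet> i) (variation \<gamma> a) a b"
proof -
  interpret continuous_bv_path \<gamma> a b
    by (rule assms(1))
  show ?thesis
  proof
    show "continuous_on {a..b} (variation \<gamma> a)"
      by (rule continuous_on_variation)
    fix x y
    assume xy: "a \<le> x" "x \<le> y" "y \<le> b"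
    have "\<bar>\<gamma> y \<bullet> i - \<gamma> x \<bullet> i\<bar> \<le> norm (\<gamma> y - \<gamma> x) * norm i"
      using Cauchy_Schwarz_ineq2[of "\<gamma> y - \<gamma> x" i] by (simp add: inner_diff_left)
    also have "\<dots> \<le> norm (\<gamma> y - \<gamma> x)"
      using assms(2) by (simp add: mult_left_le)
    also have "\<dots> \<le> variation \<gamma> x y"
      using norm_le_variation xy by blast
    also have "\<dots> = variation \<gamma> a y - variation \<gamma> a x"
      using variation_add[of a x y] xy by simp
    finally show "\<bar>\<gamma> y \<bullet> i - \<gamma> x \<bullet> i\<bar> \<le> variation \<gamma> a y - variation \<gamma> a x" .
  qed
qed

lemma sig_coord_continuous_bound:
  fixes \<gamma> :: "real \<Rightarrow> 'v::euclidean_space"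
  assumes control: "\<And>i. i \<in> Basis \<Longrightarrow> rs_controlled (\<lambda>u. \<gamma> u \<bullet> i) v a b"
  shows "set w \<subseteq> Basis \<Longrightarrow> continuous_on {a..b} (sig_coord \<gamma> a w) \<and>
    (\<forall>u\<in>{a..b}. \<bar>sig_coord \<gamma> a w u\<bar> \<le> (v u - v a) ^ length w / fact (length w))"
proof (induction w)
  case (Cons i w)
  interpret rs_controlled "\<lambda>u. \<gamma> u \<bullet> i" v a b
    using Cons.prems control by simp
  define F where "F = sig_coord \<gamma> a w"
  define k where "k = length w"
  have F: "continuous_on {a..b} F" "\<And>u. u \<in> {a..b} \<Longrightarrow> \<bar>F u\<bar> \<le> 1 / fact k * (v u - v a) ^ k"
    using Cons by (auto simp: F_def k_def)
  have integral: "has_rs_integral F (\<lambda>u. \<gamma> u \<bullet> i) a t (sig_coord \<gamma> a (i # w) t)" if t: "t \<in> {a..b}" for t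
  proof -
    obtain I where I: "has_rs_integral F (\<lambda>u. \<gamma> u \<bullet> i) a t I"
      using has_rs_integral_exists[OF F(1), of a t] t by auto
    with t have "rs_integral F (\<lambda>u. \<gamma> u \<bullet> i) a t = I"
      by (intro rs_integral_eqI) auto
    with I show ?thesis
      by (simp add: F_def)
  qed
  have bound: "\<bar>sig_coord \<gamma> a (i # w) t\<bar> \<le> (v t - v a) ^ Suc k / fact (Suc k)" if "t \<in> {a..b}" for t
    using has_rs_integral_power_bound[OF integral[OF that] _ _ F(2)] that by (simp add: mult.commute)
  define M where "M = (v b - v a) ^ k / fact k"
  have "\<bar>F u\<bar> \<le> M" if "u \<in> {a..b}" for u
  proof -
    have "(v u - v a) ^ k \<le> (v b - v a) ^ k"
      using control_mono that by (intro power_mono) auto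
    then have "(v u - v a) ^ k / fact k \<le> M"
      by (simp add: M_def divide_right_mono)
    with F(2)[OF that] show ?thesis
      by simp
  qed
  then interpret indefinite: rs_controlled "sig_coord \<gamma> a (i # w)" "\<lambda>u. M * v u" a b
    using integral by (intro rs_controlled_indefinite_integral[where F = F]) auto
  show ?case
    using indefinite.continuous_on_integrator bound by (simp add: k_def)
qed simp

lemma abs_sig_coord_le:
  fixes \<gamma> :: "real \<Rightarrow> 'v::euclidean_space"
  assumes control: "\<And>i. i \<in> Basis \<Longrightarrow> rs_controlled (\<lambda>u. \<gamma> u \<bullet> i) v a b"
    and "w \<in> words k" "u \<in> {a..b}"
  shows "\<bar>sig_coord \<gamma> a w u\<bar> \<le> (v b - v a) ^ k / fact k"
proof -
  obtain i :: 'v where "i \<in> Basis"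
    using nonempty_Basis by blast
  then interpret rs_controlled "\<lambda>u. \<gamma> u \<bullet> i" v a b
    by (rule control)
  have "\<bar>sig_coord \<gamma> a w u\<bar> \<le> (v u - v a) ^ k / fact k"
    using sig_coord_continuous_bound[OF control] assms(2,3) by (auto simp: words_def)
  also have "\<dots> \<le> (v b - v a) ^ k / fact k"
    using control_mono assms(3) by (intro divide_right_mono power_mono) auto
  finally show ?thesis .
qed

lemma abs_sig_ip_le:
  fixes \<gamma> \<sigma> :: "real \<Rightarrow> 'v::euclidean_space"
  assumes "\<And>i. i \<in> Basis \<Longrightarrow> rs_controlled (\<lambda>u. \<gamma> u \<bullet> i) v a b"
    and "\<And>i. i \<in> Basis \<Longrightarrow> rs_controlled (\<lambda>u. \<sigma> u \<bullet> i) v' a b"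
    and "s \<in> {a..b}" "t \<in> {a..b}"
  shows "\<bar>sig_ip \<gamma> \<sigma> a k s t\<bar> \<le> (real DIM('v) * (v b - v a) * (v' b - v' a)) ^ k / fact k"
proof -
  obtain i :: 'v where "i \<in> Basis"
    using nonempty_Basis by blast
  then have "v a \<le> v b" "v' a \<le> v' b"
    using rs_controlled.control_mono[OF assms(1)] rs_controlled.control_mono[OF assms(2)] assms(3) by auto
  define X where "X = real DIM('v) * (v b - v a) * (v' b - v' a)"
  have "0 \<le> X"
    using \<open>v a \<le> v b\<close> \<open>v' a \<le> v' b\<close> by (simp add: X_def)
  define A where "A = (v b - v a) ^ k / fact k"
  define A' where "A' = (v' b - v' a) ^ k / fact k"
  have "0 \<le> A" "0 \<le> A'"
    using \<open>v a \<le> v b\<close> \<open>v' a \<le> v' b\<close> by (simp_all add: A_def A'_def)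
  have "\<bar>sig_ip \<gamma> \<sigma> a k s t\<bar> \<le> (\<Sum>w\<in>words k. \<bar>sig_coord \<gamma> a w s\<bar> * \<bar>sig_coord \<sigma> a w t\<bar>)"
    unfolding sig_ip_def abs_mult[symmetric] by (rule sum_abs)
  also have "\<dots> \<le> (\<Sum>w\<in>(words k :: 'v list set). A * A')"
    using abs_sig_coord_le[OF assms(1)] abs_sig_coord_le[OF assms(2)] assms(3,4) \<open>0 \<le> A\<close> \<open>0 \<le> A'\<close>
    by (intro sum_mono mult_mono) (auto simp: A_def A'_def)
  also have "\<dots> = real DIM('v) ^ k * A * A'"
    by (simp add: words_def card_lists_length_eq)
  also have "\<dots> = X ^ k / fact k / fact k"
    by (simp add: X_def A_def A'_def power_mult_distrib)
  also have "\<dots> \<le> X ^ k / fact k / 1"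
    using \<open>0 \<le> X\<close> by (intro divide_left_mono) (auto simp: fact_ge_1)
  finally show ?thesis
    by (simp add: X_def)
qed

lemma summable_abs_sig_ip:
  fixes \<gamma> \<sigma> :: "real \<Rightarrow> 'v::euclidean_space"
  assumes "continuous_on {a..b} \<gamma>" "bounded_variation_on a b \<gamma>"
    and "continuous_on {a..b} \<sigma>" "bounded_variation_on a b \<sigma>"
    and "s \<in> {a..b}" "t \<in> {a..b}"
  shows "summable (\<lambda>k. \<bar>sig_ip \<gamma> \<sigma> a k s t\<bar>)"
proof -
  have \<gamma>: "continuous_bv_path \<gamma> a b" and \<sigma>: "continuous_bv_path \<sigma> a b"
    using assms by (simp_all add: continuous_bv_path_def continuous_bv_path_axioms_def bounded_variation_path_def)
  have control_\<gamma>: "rs_controlled (\<lambda>u. \<gamma> u \<bullet> i) (variation \<gamma> a) a b"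
    and control_\<sigma>: "rs_controlled (\<lambda>u. \<sigma> u \<bullet> i) (variation \<sigma> a) a b" if "i \<in> Basis" for i
    using rs_controlled_coordinate[OF \<gamma>] rs_controlled_coordinate[OF \<sigma>] that by (simp_all add: norm_Basis)
  define X where "X = real DIM('v) * variation \<gamma> a b * variation \<sigma> a b"
  have summable_X: "summable (\<lambda>k. X ^ k / fact k)"
    using summable_exp_generic[of X] by (simp add: divide_inverse_commute)
  have bound: "norm \<bar>sig_ip \<gamma> \<sigma> a k s t\<bar> \<le> X ^ k / fact k" for k
    using abs_sig_ip_le[OF control_\<gamma> control_\<sigma> assms(5,6), of k] by (simp add: X_def)
  show ?thesis
    by (rule summable_comparison_test'[where N = 0, OF summable_X]) (use bound in simp)
qed

lemma sig_ip_0 [simp]: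
  fixes \<gamma> \<sigma> :: "real \<Rightarrow> 'v::euclidean_space"
  shows "sig_ip \<gamma> \<sigma> a 0 s t = 1"
proof -
  have "words 0 = ({[]} :: 'v list set)"
    by (auto simp: words_def)
  then show ?thesis
    by (simp add: sig_ip_def)
qed

section \<open>Fourier coefficients\<close>

definition fourier_coeff :: "(real \<Rightarrow> complex) \<Rightarrow> int \<Rightarrow> complex" where
  "fourier_coeff f k = integral {-pi..pi} (\<lambda>x. f x * exp (- \<i> * of_int k * of_real x)) / (2 * pi)"

lemma absolutely_integrable_if_bounded:
  fixes f :: "real \<Rightarrow> 'b::euclidean_space"
  assumes "f integrable_on {a..b}" "bounded (f ` {a<..<b})"
  shows "f absolutely_integrable_on {a..b}"
proof -
  obtain B where B: "\<And>x. x \<in> {a<..<b} \<Longrightarrow> norm (f x) \<le> B"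
    using assms(2) unfolding bounded_iff by blast
  have "f integrable_on {a<..<b}"
    using assms(1) by (simp add: integrable_on_open_interval_real)
  then have "f \<in> borel_measurable (lebesgue_on {a<..<b})"
    by (rule integrable_imp_measurable)
  moreover have "(\<lambda>x. B) integrable_on {a<..<b}"
    using integrable_const_ivl[of B a b] by (simp add: integrable_on_open_interval_real)
  ultimately have "f absolutely_integrable_on {a<..<b}"
    using B by (intro measurable_bounded_by_integrable_imp_absolutely_integrable) auto
  then show ?thesis
    using absolutely_integrable_on_open_interval[where f = f and a = a and b = b] by simp
qed

lemma absolutely_integrable_continuous_mult:
  fixes f h :: "real \<Rightarrow> complex"
  assumes "f absolutely_integrable_on {a..b}" "continuous_on {a..b} h"
  shows "(\<lambda>x. h x * f x) absolutely_integrable_on {a..b}"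
proof (rule absolutely_integrable_bounded_measurable_product[OF bilinear_times _ _ _ assms(1)])
  show "h \<in> borel_measurable (lebesgue_on {a..b})"
    using assms(2) by (simp add: continuous_imp_measurable_on_sets_lebesgue)
  show "bounded (h ` {a..b})"
    using assms(2) by (simp add: compact_imp_bounded compact_continuous_image)
qed simp

lemma norm_fourier_coeff_le:
  assumes "f absolutely_integrable_on {-pi..pi}"
  shows "norm (fourier_coeff f k) \<le> integral {-pi..pi} (\<lambda>x. norm (f x)) / (2 * pi)"
proof -
  have "norm (integral {-pi..pi} (\<lambda>x. exp (- \<i> * of_int k * of_real x) * f x))
      \<le> integral {-pi..pi} (\<lambda>x. norm (f x))"
  proof (rule integral_norm_bound_integral)
    have "(\<lambda>x. exp (- \<i> * of_int k * of_real x) * f x) absolutely_integrable_on {-pi..pi}"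
      by (intro absolutely_integrable_continuous_mult assms continuous_intros)
    then show "(\<lambda>x. exp (- \<i> * of_int k * of_real x) * f x) integrable_on {-pi..pi}"
      by (rule set_lebesgue_integral_eq_integral(1))
    show "(\<lambda>x. norm (f x)) integrable_on {-pi..pi}"
      using assms by (simp add: absolutely_integrable_on_def)
  qed (simp add: norm_mult norm_exp_eq_Re)
  then show ?thesis
    by (simp add: fourier_coeff_def norm_divide divide_right_mono mult.commute)
qed

lemma fourier_coeff_of_nat:
  "fourier_coeff f (int n) = integral {-pi..pi} (\<lambda>x. exp (- \<i> * of_real x) ^ n * f x) / (2 * pi)"
  and fourier_coeff_minus_of_nat:
  "fourier_coeff f (- int n) = integral {-pi..pi} (\<lambda>x. exp (\<i> * of_real x) ^ n * f x) / (2 * pi)"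
  by (simp_all add: fourier_coeff_def exp_of_nat_mult[symmetric] mult.commute mult.left_commute)

lemma sums_integral_power_series_mult:
  fixes f z :: "real \<Rightarrow> complex" and c :: "nat \<Rightarrow> complex"
  assumes f: "f absolutely_integrable_on {a..b}"
    and z: "continuous_on {a..b} z" "\<And>x. x \<in> {a..b} \<Longrightarrow> norm (z x) \<le> 1"
    and c: "summable (\<lambda>n. norm (c n))"
  shows "(\<lambda>x. (\<Sum>n. z x ^ n * c n) * f x) integrable_on {a..b}"
    and "(\<lambda>n. c n * integral {a..b} (\<lambda>x. z x ^ n * f x)) sums integral {a..b} (\<lambda>x. (\<Sum>n. z x ^ n * c n) * f x)"
proof -
  define P where "P m x = (\<Sum>n<m. z x ^ n * c n) * f x" for m x
  have zf: "(\<lambda>x. z x ^ n * f x) integrable_on {a..b}" for n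
    by (intro set_lebesgue_integral_eq_integral(1) absolutely_integrable_continuous_mult f
        continuous_intros z(1))
  have P_eq: "P m = (\<lambda>x. \<Sum>n<m. c n * (z x ^ n * f x))" for m
    by (auto simp: P_def fun_eq_iff sum_distrib_left sum_distrib_right mult_ac)
  have P: "P m integrable_on {a..b}" for m
    unfolding P_eq using zf by (intro integrable_sum integrable_on_mult_right) auto
  have integral_P: "integral {a..b} (P m) = (\<Sum>n<m. c n * integral {a..b} (\<lambda>x. z x ^ n * f x))" for m
    unfolding P_eq using zf by (simp add: integral_sum integrable_on_mult_right)
  have norm_le: "norm (z x ^ n * c n) \<le> norm (c n)" if "x \<in> {a..b}" for x n
    using z(2)[OF that] by (simp add: norm_mult norm_power mult_left_le_one_le power_le_one)
  have bound: "norm (P m x) \<le> (\<Sum>n. norm (c n)) * norm (f x)" if "x \<in> {a..b}" for m x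
  proof -
    have "norm (\<Sum>n<m. z x ^ n * c n) \<le> (\<Sum>n<m. norm (c n))"
      using norm_le[OF that] by (intro order_trans[OF norm_sum] sum_mono) auto
    also have "\<dots> \<le> (\<Sum>n. norm (c n))"
      using c by (intro sum_le_suminf) auto
    finally show ?thesis
      unfolding P_def norm_mult by (rule mult_right_mono) simp
  qed
  have dominant: "(\<lambda>x. (\<Sum>n. norm (c n)) * norm (f x)) integrable_on {a..b}"
    using f by (intro integrable_on_mult_right) (simp add: absolutely_integrable_on_def)
  have limit: "(\<lambda>m. P m x) \<longlonglongrightarrow> (\<Sum>n. z x ^ n * c n) * f x" if "x \<in> {a..b}" for x
  proof -
    have "summable (\<lambda>n. norm (z x ^ n * c n))"
      by (rule summable_comparison_test'[OF c]) (use norm_le[OF that] in simp)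
    then show ?thesis
      unfolding P_def by (intro tendsto_mult_right summable_LIMSEQ) (rule summable_norm_cancel)
  qed
  show "(\<lambda>x. (\<Sum>n. z x ^ n * c n) * f x) integrable_on {a..b}"
    by (rule dominated_convergence(1)[OF P dominant bound limit])
  have "(\<lambda>m. integral {a..b} (P m)) \<longlonglongrightarrow> integral {a..b} (\<lambda>x. (\<Sum>n. z x ^ n * c n) * f x)"
    by (rule dominated_convergence(2)[OF P dominant bound limit])
  then show "(\<lambda>n. c n * integral {a..b} (\<lambda>x. z x ^ n * f x)) sums integral {a..b} (\<lambda>x. (\<Sum>n. z x ^ n * c n) * f x)"
    by (simp add: sums_def integral_P)
qed

lemma sums_fourier_coeff:
  assumes f: "f absolutely_integrable_on {-pi..pi}" and c: "summable (\<lambda>n. norm (c n))"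
  shows "(\<lambda>n. c n * fourier_coeff f (int n))
      sums (integral {-pi..pi} (\<lambda>x. (\<Sum>n. exp (- \<i> * of_real x) ^ n * c n) * f x) / (2 * pi))"
    and "(\<lambda>n. c n * fourier_coeff f (- int n))
      sums (integral {-pi..pi} (\<lambda>x. (\<Sum>n. exp (\<i> * of_real x) ^ n * c n) * f x) / (2 * pi))"
proof -
  have "(\<lambda>n. c n * integral {-pi..pi} (\<lambda>x. exp (- \<i> * of_real x) ^ n * f x) / (2 * pi))
      sums (integral {-pi..pi} (\<lambda>x. (\<Sum>n. exp (- \<i> * of_real x) ^ n * c n) * f x) / (2 * pi))"
    by (intro sums_divide sums_integral_power_series_mult(2)[OF f _ _ c] continuous_intros)
      (simp add: norm_exp_eq_Re)
  then show "(\<lambda>n. c n * fourier_coeff f (int n))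
      sums (integral {-pi..pi} (\<lambda>x. (\<Sum>n. exp (- \<i> * of_real x) ^ n * c n) * f x) / (2 * pi))"
    by (simp add: fourier_coeff_of_nat)
  have "(\<lambda>n. c n * integral {-pi..pi} (\<lambda>x. exp (\<i> * of_real x) ^ n * f x) / (2 * pi))
      sums (integral {-pi..pi} (\<lambda>x. (\<Sum>n. exp (\<i> * of_real x) ^ n * c n) * f x) / (2 * pi))"
    by (intro sums_divide sums_integral_power_series_mult(2)[OF f _ _ c] continuous_intros)
      (simp add: norm_exp_eq_Re)
  then show "(\<lambda>n. c n * fourier_coeff f (- int n))
      sums (integral {-pi..pi} (\<lambda>x. (\<Sum>n. exp (\<i> * of_real x) ^ n * c n) * f x) / (2 * pi))"
    by (simp add: fourier_coeff_minus_of_nat)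
qed

lemma has_sum_int_split:
  fixes g :: "int \<Rightarrow> 'a::banach"
  assumes "summable (\<lambda>n. norm (g (int n)))" "summable (\<lambda>n. norm (g (- int n)))"
  shows "(g has_sum ((\<Sum>n. g (int n)) + (\<Sum>n. g (- int n)) - g 0)) UNIV"
proof -
  have "((\<lambda>n. g (int n)) has_sum (\<Sum>n. g (int n))) UNIV"
    using norm_summable_imp_has_sum[OF assms(1) summable_sums[OF summable_norm_cancel[OF assms(1)]]] .
  then have nonneg: "(g has_sum (\<Sum>n. g (int n))) (range int)"
    by (subst has_sum_reindex) (auto simp: o_def)
  have neg_summable: "summable (\<lambda>n. norm (g (- int (Suc n))))"
    using assms(2) by (subst summable_Suc_iff)
  have "((\<lambda>n. g (- int (Suc n))) has_sum (\<Sum>n. g (- int (Suc n)))) UNIV"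
    using norm_summable_imp_has_sum[OF neg_summable summable_sums[OF summable_norm_cancel[OF neg_summable]]] .
  then have "(g has_sum (\<Sum>n. g (- int (Suc n)))) (range (\<lambda>n. - int (Suc n)))"
    by (subst has_sum_reindex) (auto simp: inj_on_def o_def)
  moreover have "(\<Sum>n. g (- int (Suc n))) = (\<Sum>n. g (- int n)) - g 0"
    using suminf_split_head[OF summable_norm_cancel[OF assms(2)]] by simp
  ultimately have neg: "(g has_sum ((\<Sum>n. g (- int n)) - g 0)) (range (\<lambda>n. - int (Suc n)))"
    by simp
  have "range int \<union> range (\<lambda>n. - int (Suc n)) = UNIV"
  proof -
    have "k \<in> range int \<union> range (\<lambda>n. - int (Suc n))" for k :: int
      by (cases k rule: int_cases) auto
    then show ?thesis
      by auto
  qed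
  moreover have "range int \<inter> range (\<lambda>n. - int (Suc n)) = {}"
    by auto
  ultimately show ?thesis
    using has_sum_Un_disjoint[OF nonneg neg] by (simp add: add_diff_eq)
qed

lemma infsum_mult_nat_abs:
  fixes \<phi> :: "int \<Rightarrow> 'a::{real_normed_algebra,banach}" and c :: "nat \<Rightarrow> 'a"
  assumes \<phi>: "\<And>k. norm (\<phi> k) \<le> B" and c: "summable (\<lambda>n. norm (c n))"
  shows "(\<Sum>\<^sub>\<infinity>k. \<phi> k * c (nat \<bar>k\<bar>)) = (\<Sum>n. \<phi> (int n) * c n) + (\<Sum>n. \<phi> (- int n) * c n) - \<phi> 0 * c 0"
proof -
  have bound: "norm (norm (\<phi> k * c n)) \<le> B * norm (c n)" for k n
    using norm_mult_ineq[of "\<phi> k" "c n"] mult_right_mono[OF \<phi>[of k] norm_ge_zero[of "c n"]] by simp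
  have "summable (\<lambda>n. norm (\<phi> (int n) * c n))" "summable (\<lambda>n. norm (\<phi> (- int n) * c n))"
    by (rule summable_comparison_test'[where N = 0, OF summable_mult[OF c]], rule bound)+
  then show ?thesis
    by (intro infsumI) (use has_sum_int_split[where g = "\<lambda>k. \<phi> k * c (nat \<bar>k\<bar>)"] in simp)
qed

theorem mainTheorem8:
  fixes \<gamma> \<sigma> :: "real \<Rightarrow> 'v::euclidean_space"
    and a b :: real
    and f :: "real \<Rightarrow> complex"
    and \<phi> :: "int \<Rightarrow> complex"
  assumes "continuous_on {a..b} \<gamma>" and "continuous_on {a..b} \<sigma>"
    and "bounded_variation_on a b \<gamma>" and "bounded_variation_on a b \<sigma>"
    and "f integrable_on {-pi..pi}" and "bounded (f ` {-pi<..<pi})"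
    and "\<And>k. \<phi> k = integral {-pi..pi} (\<lambda>x. f x * exp (- \<i> * of_int k * of_real x)) / (2 * pi)"
    and "s \<in> {a..b}" and "t \<in> {a..b}"
  shows "sig_kernel_phi \<phi> \<gamma> \<sigma> a s t =
           integral {-pi..pi} (\<lambda>x. (sig_kernel_w (exp (- \<i> * of_real x)) \<gamma> \<sigma> a s t
                                    + sig_kernel_w (exp (\<i> * of_real x)) \<gamma> \<sigma> a s t) * f x) / (2 * pi)
           - \<phi> 0"
proof -
  define c where "c k = complex_of_real (sig_ip \<gamma> \<sigma> a k s t)" for k
  have c: "summable (\<lambda>k. norm (c k))"
    using summable_abs_sig_ip[OF assms(1,3,2,4,8,9)] by (simp add: c_def)
  have f: "f absolutely_integrable_on {-pi..pi}"
    using absolutely_integrable_if_bounded assms(5,6) by simp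
  have \<phi>: "\<phi> = fourier_coeff f"
    using assms(7) by (simp add: fun_eq_iff fourier_coeff_def)
  have "sig_kernel_phi \<phi> \<gamma> \<sigma> a s t = (\<Sum>n. \<phi> (int n) * c n) + (\<Sum>n. \<phi> (- int n) * c n) - \<phi> 0"
    using infsum_mult_nat_abs[OF norm_fourier_coeff_le[OF f] c] by (simp add: sig_kernel_phi_def c_def \<phi>)
  also have "\<dots> = integral {-pi..pi} (\<lambda>x. (\<Sum>n. exp (- \<i> * of_real x) ^ n * c n) * f x) / (2 * pi)
      + integral {-pi..pi} (\<lambda>x. (\<Sum>n. exp (\<i> * of_real x) ^ n * c n) * f x) / (2 * pi) - \<phi> 0"
    using sums_unique[OF sums_fourier_coeff(1)[OF f c]] sums_unique[OF sums_fourier_coeff(2)[OF f c]]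
    by (simp add: \<phi> mult.commute)
  also have "\<dots> = integral {-pi..pi} (\<lambda>x. ((\<Sum>n. exp (- \<i> * of_real x) ^ n * c n)
      + (\<Sum>n. exp (\<i> * of_real x) ^ n * c n)) * f x) / (2 * pi) - \<phi> 0"
    using integral_add[OF sums_integral_power_series_mult(1)[OF f _ _ c] sums_integral_power_series_mult(1)[OF f _ _ c]]
    by (simp add: distrib_right add_divide_distrib norm_exp_eq_Re continuous_intros)
  finally show ?thesis
    by (simp add: sig_kernel_w_def c_def)
qed

end
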